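(* Let $G=(G_1,\dots,G_n)\in Y$. Then for almost every $x\in N$, $$\tilde Z(G)(x)=\sum_{k=1}^n\int_{(a_k,+\infty)}q_k(\lambda)G_k(\lambda)F^{-,k}_\lambda(x)\,d\lambda.$$
   Context: Fix an integer $n\ge 2$, constants $c_1,\dots,c_n>0$ and $0\le a_1\le\dots\le a_n<\infty$. Let $N_1,\dots,N_n$ be $n$ disjoint copies of $(0,\infty)$ and $N$ the star-shaped network obtained from $\overline{N_1},\dots,\overline{N_n}$ by identifying their endpoints $0$; functions on $N$ are $n$-tuples of functions on the $N_k$, and $\int_N g\,dx:=\sum_k\int_{N_k}g_k\,dx$. $H=L^2(N)=\prod_kL^2(N_k)$. Complex square root: $\sqrt{re^{i\phi}}=\sqrt re^{i\phi/2}$, $r\ge0$, $\phi\in[-\pi,\pi)$. For $\lambda\in\mathbb C$: $\xi_k(\lambda)=\sqrt{(\lambda-a_k)/c_k}$, $s_k(\lambda)=-\sum_{l\ne k}c_l\xi_l(\lambda)/(c_k\xi_k(\lambda))$. $F^{-,j}_\lambda:N\to\mathbb C$ is given for $x\in\overline{N_k}$ by $F^{-,j}_\lambda(x)=\cos(\xi_j(\lambda)x)-is_j(\lambda)\sin(\xi_j(\lambda)x)$ if $k=j$ and $\exp(-i\xi_k(\lambda)x)$ if $k\ne j$. For real $\lambda$, $w(\lambda):=-i\sum_jc_j\xi_j(\lambda)$, $q_l(\lambda)=0$ if $\lambda<a_l$ and $q_l(\lambda)=c_l\xi_l(\lambda)/(\pi|w(\lambda)|^2)$ if $\lambda>a_l$.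 $L^2_q:=\prod_{k=1}^nL^2((a_k,\infty),q_k\,d\lambda)$ with $(F,G)_q=\sum_k\int_{a_k}^\infty q_kF_k\overline{G_k}\,d\lambda$. Fix $\chi\in C^\infty(\mathbb R)$ with $\chi=0$ on $(-\infty,a_n+1)$, $\chi=1$ on $(a_n+2,\infty)$; $X$ is the (dense) set of $(G_1,\dots,G_n)\in L^2_q$ with $G_k\in C^\infty([a_k,\infty))$ and $\chi G_k$ (extended by $0$) in $\mathcal S(\mathbb R)$. For $G\in X$, $Z(G)(x)=\sum_k\int_{a_k}^\infty q_kG_kF^{-,k}_\lambda(x)\,d\lambda$; $\tilde Z:L^2_q\to H$ denotes the unique bounded extension of $Z$ from $X$ to $L^2_q$. $Y$ is the set of $(G_1,\dots,G_n)\in L^2_q$ such that each $G_j$ has compact support and $\mathrm{supp}(G_j)\cap\{a_1,\dots,a_n\}=\emptyset$. *)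

theory Defs
  imports "HOL-Analysis.Analysis"
begin

text \<open>Branch of the square root from the paper: argument taken in [-pi, pi).
  It agrees with csqrt except on the negative real axis, where it gives -i sqrt|z|.\<close>
definition psqrt :: "complex \<Rightarrow> complex" where
  "psqrt z = (if Im z = 0 \<and> Re z < 0 then - \<i> * complex_of_real (sqrt (- Re z)) else csqrt z)"

text \<open>Indices k range over {1..n}; a point x of the edge N_k is represented by (k, x), x > 0.
  Functions on N (elements of H) and elements of L2_q are represented as
  nat => real => complex.\<close>

definition xi :: "(nat \<Rightarrow> real) \<Rightarrow> (nat \<Rightarrow> real) \<Rightarrow> nat \<Rightarrow> complex \<Rightarrow> complex" where
  "xi c a k lam = psqrt ((lam - complex_of_real (a k)) / complex_of_real (c k))"

definition s_coef :: "nat \<Rightarrow> (nat \<Rightarrow> real) \<Rightarrow> (nat \<Rightarrow> real) \<Rightarrow> nat \<Rightarrow> complex \<Rightarrow> complex" where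
  "s_coef n c a k lam =
     - (\<Sum>l\<in>{1..n} - {k}. complex_of_real (c l) * xi c a l lam)
       / (complex_of_real (c k) * xi c a k lam)"

text \<open>Fminus n c a j lam k x = F^{-,j}_lam evaluated at the point x of edge k.\<close>
definition Fminus :: "nat \<Rightarrow> (nat \<Rightarrow> real) \<Rightarrow> (nat \<Rightarrow> real) \<Rightarrow> nat \<Rightarrow> complex \<Rightarrow> nat \<Rightarrow> real \<Rightarrow> complex" where
  "Fminus n c a j lam k x =
     (if k = j then cos (xi c a j lam * complex_of_real x)
                     - \<i> * s_coef n c a j lam * sin (xi c a j lam * complex_of_real x)
      else exp (- \<i> * xi c a k lam * complex_of_real x))"

definition wfun :: "nat \<Rightarrow> (nat \<Rightarrow> real) \<Rightarrow> (nat \<Rightarrow> real) \<Rightarrow> real \<Rightarrow> complex" where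
  "wfun n c a lam = - \<i> * (\<Sum>j\<in>{1..n}. complex_of_real (c j) * xi c a j (complex_of_real lam))"

text \<open>q_l; for lam > a_l the value c_l xi_l(lam)/(pi |w|^2) is real (xi_l(lam) > 0), we take Re.
  The value at lam = a_l (a null set) is not specified in the paper; we put 0.\<close>
definition qfun :: "nat \<Rightarrow> (nat \<Rightarrow> real) \<Rightarrow> (nat \<Rightarrow> real) \<Rightarrow> nat \<Rightarrow> real \<Rightarrow> real" where
  "qfun n c a l lam =
     (if lam > a l then c l * Re (xi c a l (complex_of_real lam)) / (pi * (cmod (wfun n c a lam))\<^sup>2)
      else 0)"

definition in_L2q :: "nat \<Rightarrow> (nat \<Rightarrow> real) \<Rightarrow> (nat \<Rightarrow> real) \<Rightarrow> (nat \<Rightarrow> real \<Rightarrow> complex) \<Rightarrow> bool" where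
  "in_L2q n c a G \<longleftrightarrow> (\<forall>k\<in>{1..n}.
      set_borel_measurable lborel {a k<..} (G k) \<and>
      set_integrable lborel {a k<..} (\<lambda>lam. qfun n c a k lam * (cmod (G k lam))\<^sup>2))"

definition norm_L2q :: "nat \<Rightarrow> (nat \<Rightarrow> real) \<Rightarrow> (nat \<Rightarrow> real) \<Rightarrow> (nat \<Rightarrow> real \<Rightarrow> complex) \<Rightarrow> real" where
  "norm_L2q n c a G = sqrt (\<Sum>k\<in>{1..n}.
      set_lebesgue_integral lborel {a k<..} (\<lambda>lam. qfun n c a k lam * (cmod (G k lam))\<^sup>2))"

definition in_H :: "nat \<Rightarrow> (nat \<Rightarrow> real \<Rightarrow> complex) \<Rightarrow> bool" where
  "in_H n f \<longleftrightarrow> (\<forall>k\<in>{1..n}.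
      set_borel_measurable lborel {0<..} (f k) \<and>
      set_integrable lborel {0<..} (\<lambda>x. (cmod (f k x))\<^sup>2))"

definition norm_H :: "nat \<Rightarrow> (nat \<Rightarrow> real \<Rightarrow> complex) \<Rightarrow> real" where
  "norm_H n f = sqrt (\<Sum>k\<in>{1..n}. set_lebesgue_integral lborel {0<..} (\<lambda>x. (cmod (f k x))\<^sup>2))"

definition ae_eq_N :: "nat \<Rightarrow> (nat \<Rightarrow> real \<Rightarrow> complex) \<Rightarrow> (nat \<Rightarrow> real \<Rightarrow> complex) \<Rightarrow> bool" where
  "ae_eq_N n f g \<longleftrightarrow> (\<forall>k\<in>{1..n}. AE x in lborel. x > 0 \<longrightarrow> f k x = g k x)"

text \<open>C^infinity on a set S (one-sided derivatives at boundary points of S, e.g. [a,oo)).\<close>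
definition C_inf_on :: "real set \<Rightarrow> (real \<Rightarrow> 'b::real_normed_vector) \<Rightarrow> bool" where
  "C_inf_on S f \<longleftrightarrow> (\<exists>D. (\<forall>t\<in>S. D 0 t = f t) \<and>
      (\<forall>m. \<forall>t\<in>S. (D m has_vector_derivative D (Suc m) t) (at t within S)))"

definition schwartz :: "(real \<Rightarrow> 'b::real_normed_vector) \<Rightarrow> bool" where
  "schwartz f \<longleftrightarrow> (\<exists>D. D 0 = f \<and>
      (\<forall>m t. (D m has_vector_derivative D (Suc m) t) (at t)) \<and>
      (\<forall>m p. \<exists>B. \<forall>t. \<bar>t\<bar> ^ p * norm (D m t) \<le> B))"

definition Xset :: "nat \<Rightarrow> (nat \<Rightarrow> real) \<Rightarrow> (nat \<Rightarrow> real) \<Rightarrow> (real \<Rightarrow> real) \<Rightarrow> (nat \<Rightarrow> real \<Rightarrow> complex) set" where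
  "Xset n c a chi = {G. in_L2q n c a G \<and> (\<forall>k\<in>{1..n}.
      C_inf_on {a k..} (G k) \<and>
      schwartz (\<lambda>t. if a k \<le> t then complex_of_real (chi t) * G k t else 0))}"

definition Zmap :: "nat \<Rightarrow> (nat \<Rightarrow> real) \<Rightarrow> (nat \<Rightarrow> real) \<Rightarrow> (nat \<Rightarrow> real \<Rightarrow> complex) \<Rightarrow> nat \<Rightarrow> real \<Rightarrow> complex" where
  "Zmap n c a G = (\<lambda>k x. \<Sum>j\<in>{1..n}. set_lebesgue_integral lborel {a j<..}
      (\<lambda>lam. complex_of_real (qfun n c a j lam) * G j lam * Fminus n c a j (complex_of_real lam) k x))"

text \<open>T is (a representative of) the bounded linear extension tilde Z of Z from X to L2_q:
  it maps L2_q into H, is linear (up to a.e. equality), bounded, and agrees with Z on X.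
  Since X is dense, these properties determine T up to a.e. equality.\<close>
definition is_Ztilde :: "nat \<Rightarrow> (nat \<Rightarrow> real) \<Rightarrow> (nat \<Rightarrow> real) \<Rightarrow> (real \<Rightarrow> real)
     \<Rightarrow> ((nat \<Rightarrow> real \<Rightarrow> complex) \<Rightarrow> (nat \<Rightarrow> real \<Rightarrow> complex)) \<Rightarrow> bool" where
  "is_Ztilde n c a chi T \<longleftrightarrow>
     (\<forall>G. in_L2q n c a G \<longrightarrow> in_H n (T G)) \<and>
     (\<forall>G G' \<alpha> \<beta>. in_L2q n c a G \<and> in_L2q n c a G' \<longrightarrow>
        ae_eq_N n (T (\<lambda>j t. \<alpha> * G j t + \<beta> * G' j t)) (\<lambda>k x. \<alpha> * T G k x + \<beta> * T G' k x)) \<and>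
     (\<exists>C. \<forall>G. in_L2q n c a G \<longrightarrow> norm_H n (T G) \<le> C * norm_L2q n c a G) \<and>
     (\<forall>G\<in>Xset n c a chi. ae_eq_N n (T G) (Zmap n c a G))"

definition Yset :: "nat \<Rightarrow> (nat \<Rightarrow> real) \<Rightarrow> (nat \<Rightarrow> real) \<Rightarrow> (nat \<Rightarrow> real \<Rightarrow> complex) set" where
  "Yset n c a = {G. in_L2q n c a G \<and> (\<forall>j\<in>{1..n}. \<exists>K. compact K \<and> K \<inter> a ` {1..n} = {} \<and>
      (AE lam in lborel. a j < lam \<and> lam \<notin> K \<longrightarrow> G j lam = 0))}"

end

theory Submission
  imports Defs
begin

(* Each component G_j of G in Y vanishes outside a compact interval
   [u_j, v_j] strictly above the threshold a_j; on such an interval the weight q_j and the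
   generalized eigenfunctions F^{-,j}_lambda(x) are bounded.  We approximate G in L^2_q by smooth
   functions gs m (a plateau function times a polynomial) supported in [u_j, v_j]; these lie in X.
   Then (1) Z(gs m)(x) converges to the right-hand side for every x > 0, because pairings of
   L^2_q-convergent functions with bounded functions converge, and (2) Z~ G - Z(gs m) =
   Z~(G - gs m) tends to 0 in H since Z~ is bounded.  Fatou's lemma combines (1) and (2). *)

section \<open>Smooth functions\<close>

definition smooth :: "(real \<Rightarrow> complex) \<Rightarrow> bool" where
  "smooth f \<longleftrightarrow> (\<exists>D. D 0 = f \<and> (\<forall>m t. (D m has_vector_derivative D (Suc m) t) (at t)))"

text \<open>Leibniz's rule, in the form of one differentiation step: it shows that the products
  \<open>\<Sum>i\<le>m. (m choose i) f\<^sup>(\<^sup>i\<^sup>) g\<^sup>(\<^sup>m\<^sup>-\<^sup>i\<^sup>)\<close> form a derivative sequence.\<close>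
lemma leibniz_derivative:
  fixes Df Dg :: "nat \<Rightarrow> real \<Rightarrow> complex"
  assumes f: "\<And>m t. (Df m has_vector_derivative Df (Suc m) t) (at t)"
      and g: "\<And>m t. (Dg m has_vector_derivative Dg (Suc m) t) (at t)"
  shows "((\<lambda>t. \<Sum>i = 0..m. of_nat (m choose i) * (Df i t * Dg (m - i) t)) has_vector_derivative
          (\<Sum>i = 0..Suc m. of_nat (Suc m choose i) * (Df i t * Dg (Suc m - i) t))) (at t)"
proof -
  have "((\<lambda>t. \<Sum>i = 0..m. of_nat (m choose i) * (Df i t * Dg (m - i) t)) has_vector_derivative
      (\<Sum>i = 0..m. of_nat (m choose i) * (Df i t * Dg (Suc (m - i)) t + Df (Suc i) t * Dg (m - i) t))) (at t)"
    by (intro has_vector_derivative_sum has_vector_derivative_mult_right has_vector_derivative_mult f g)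
  moreover have "(\<Sum>i = 0..m. of_nat (m choose i) * (Df i t * Dg (Suc (m - i)) t + Df (Suc i) t * Dg (m - i) t))
      = (\<Sum>i = 0..Suc m. of_nat (Suc m choose i) * (Df i t * Dg (Suc m - i) t))"
    (is "?lhs = ?rhs")
  proof -
    have shifted: "Df 0 t * Dg (Suc m) t + (\<Sum>i = 0..m. of_nat (m choose Suc i) * (Df (Suc i) t * Dg (m - i) t))
        = (\<Sum>i = 0..m. of_nat (m choose i) * (Df i t * Dg (Suc (m - i)) t))"
    proof -
      have "Df 0 t * Dg (Suc m) t + (\<Sum>i = 0..m. of_nat (m choose Suc i) * (Df (Suc i) t * Dg (m - i) t))
          = (\<Sum>i = 0..Suc m. of_nat (m choose i) * (Df i t * Dg (Suc m - i) t))"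
        by (subst sum.atLeast0_atMost_Suc_shift) simp
      also have "\<dots> = (\<Sum>i = 0..m. of_nat (m choose i) * (Df i t * Dg (Suc (m - i)) t))"
        by (simp add: sum.atLeast0_atMost_Suc Suc_diff_le)
      finally show ?thesis .
    qed
    have "?rhs = Df 0 t * Dg (Suc m) t
        + (\<Sum>i = 0..m. of_nat (Suc m choose Suc i) * (Df (Suc i) t * Dg (m - i) t))"
      by (subst sum.atLeast0_atMost_Suc_shift) simp
    also have "\<dots> = Df 0 t * Dg (Suc m) t
        + (\<Sum>i = 0..m. of_nat (m choose Suc i) * (Df (Suc i) t * Dg (m - i) t))
        + (\<Sum>i = 0..m. of_nat (m choose i) * (Df (Suc i) t * Dg (m - i) t))"
      by (simp add: sum.distrib algebra_simps)
    also have "\<dots> = ?lhs"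
      unfolding shifted by (simp add: sum.distrib algebra_simps)
    finally show ?thesis by simp
  qed
  ultimately show ?thesis by simp
qed

lemma smooth_mult:
  assumes "smooth f" "smooth g" shows "smooth (\<lambda>t. f t * g t)"
proof -
  obtain Df where Df0: "Df 0 = f" and f: "\<And>m t. (Df m has_vector_derivative Df (Suc m) t) (at t)"
    using assms(1) unfolding smooth_def by blast
  obtain Dg where Dg0: "Dg 0 = g" and g: "\<And>m t. (Dg m has_vector_derivative Dg (Suc m) t) (at t)"
    using assms(2) unfolding smooth_def by blast
  define D where "D m t = (\<Sum>i = 0..m. of_nat (m choose i) * (Df i t * Dg (m - i) t))" for m t
  have "(D m has_vector_derivative D (Suc m) t) (at t)" for m t
    unfolding D_def by (rule leibniz_derivative[of Df Dg, OF f g])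
  moreover have "D 0 = (\<lambda>t. f t * g t)" by (rule ext) (simp add: D_def Df0 Dg0)
  ultimately show ?thesis unfolding smooth_def by blast
qed

lemma smooth_polynomial_function:
  fixes p :: "real \<Rightarrow> complex"
  assumes "polynomial_function p" shows "smooth p"
proof -
  define step where "step = (\<lambda>q::real\<Rightarrow>complex. SOME q'. polynomial_function q' \<and>
      (\<forall>x. (q has_vector_derivative q' x) (at x)))"
  have step: "polynomial_function (step q) \<and> (\<forall>x. (q has_vector_derivative step q x) (at x))"
    if pq: "polynomial_function q" for q
  proof -
    obtain q' where "polynomial_function q'" "\<And>x. (q has_vector_derivative q' x) (at x)"
      using pq has_vector_derivative_polynomial_function by blast
    then show ?thesis unfolding step_def
      by (intro someI[where x=q' and P="\<lambda>q'. polynomial_function q' \<and>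
          (\<forall>x. (q has_vector_derivative q' x) (at x))"]) blast
  qed
  define D where "D = (\<lambda>m. (step ^^ m) p)"
  have D_poly: "polynomial_function (D m)" for m
    by (induction m) (auto simp: D_def assms step)
  have "\<forall>m t. (D m has_vector_derivative D (Suc m) t) (at t)"
    using step[OF D_poly] by (simp add: D_def)
  moreover have "D 0 = p" by (simp add: D_def)
  ultimately show ?thesis unfolding smooth_def by blast
qed

lemma smooth_affine_comp:
  assumes "C_inf_on UNIV chi"
  shows "smooth (\<lambda>t. complex_of_real (chi (u + v * t)))"
proof -
  obtain D where D0: "\<And>t. D 0 t = chi t"
     and D: "\<And>m t. (D m has_vector_derivative D (Suc m) t) (at t)"
    using assms unfolding C_inf_on_def by auto
  have deriv: "((\<lambda>t. D m (u + v * t) * v ^ m) has_real_derivative D (Suc m) (u + v * t) * v ^ Suc m) (at t)"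
    for m t
  proof -
    have "(D m has_real_derivative D (Suc m) (u + v * t)) (at (u + v * t))"
      using D by (simp add: has_real_derivative_iff_has_vector_derivative)
    moreover have "((\<lambda>t. u + v * t) has_real_derivative v) (at t)"
      by (auto intro!: derivative_eq_intros)
    ultimately have "((\<lambda>t. D m (u + v * t)) has_real_derivative D (Suc m) (u + v * t) * v) (at t)"
      by (rule DERIV_chain2)
    from DERIV_cmult_right[OF this, of "v ^ m"] show ?thesis
      by (simp add: algebra_simps)
  qed
  define E where "E m t = complex_of_real (D m (u + v * t) * v ^ m)" for m t
  have "(E m has_vector_derivative E (Suc m) t) (at t)" for m t
    unfolding E_def by (rule has_vector_derivative_of_real[OF deriv])
  moreover have "E 0 = (\<lambda>t. complex_of_real (chi (u + v * t)))"
    by (rule ext) (simp add: E_def D0)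
  ultimately show ?thesis unfolding smooth_def by blast
qed

lemma derivatives_vanish_on_open:
  fixes D :: "nat \<Rightarrow> real \<Rightarrow> complex"
  assumes D: "\<And>m t. (D m has_vector_derivative D (Suc m) t) (at t)"
    and U: "open U" and zero: "\<And>t. t \<in> U \<Longrightarrow> D 0 t = 0" and t: "t \<in> U"
  shows "D m t = 0"
  using t
proof (induction m arbitrary: t)
  case (Suc m)
  have "((\<lambda>_. 0) has_vector_derivative D (Suc m) t) (at t)"
    by (rule has_vector_derivative_transform_within_open[OF D U Suc.prems]) (simp add: Suc.IH)
  then show ?case using vector_derivative_unique_at[of "\<lambda>_. 0" _ t 0] by simp
qed (use zero in simp)

lemma smooth_continuous_on: "smooth f \<Longrightarrow> continuous_on S f"
  unfolding smooth_def
  by (metis continuous_at_imp_continuous_on has_vector_derivative_continuous)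

lemma smooth_imp_C_inf_on: "smooth f \<Longrightarrow> C_inf_on S f"
  unfolding smooth_def C_inf_on_def by (metis has_vector_derivative_at_within)

text \<open>A smooth function with compact support is a Schwartz function: every derivative is
  bounded and vanishes outside the support.\<close>
lemma smooth_compact_support_schwartz:
  assumes "smooth f" and zero: "\<And>t. t \<notin> {u..v} \<Longrightarrow> f t = 0"
  shows "schwartz f"
proof -
  obtain D where D0: "D 0 = f" and D: "\<And>m t. (D m has_vector_derivative D (Suc m) t) (at t)"
    using assms(1) unfolding smooth_def by blast
  have outside: "D m t = 0" if "t \<notin> {u..v}" for m t
    by (rule derivatives_vanish_on_open[of D, OF D, of "- {u..v}"]) (use that zero D0 in auto)
  have "\<exists>B. \<forall>t. \<bar>t\<bar> ^ p * norm (D m t) \<le> B" for m p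
  proof -
    have "continuous_on {u..v} (D m)"
      using D by (meson continuous_at_imp_continuous_on has_vector_derivative_continuous)
    then have "continuous_on {u..v} (\<lambda>t. \<bar>t\<bar> ^ p * norm (D m t))"
      by (intro continuous_intros)
    then have "bounded ((\<lambda>t. \<bar>t\<bar> ^ p * norm (D m t)) ` {u..v})"
      by (intro compact_imp_bounded compact_continuous_image compact_Icc)
    then obtain B where B: "\<And>t. t \<in> {u..v} \<Longrightarrow> \<bar>t\<bar> ^ p * norm (D m t) \<le> B"
      unfolding bounded_iff by fastforce
    have "\<bar>t\<bar> ^ p * norm (D m t) \<le> max B 0" for t
      using B[of t] outside[of t] by (cases "t \<in> {u..v}") auto
    then show ?thesis by blast
  qed
  then show ?thesis unfolding schwartz_def using D0 D by blast
qed

text \<open>A smooth plateau function: equal to 1 on \<open>[u0, v0]\<close> and vanishing outside \<open>[u, v]\<close>,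
  built from a smooth step function \<open>chi\<close> that rises from 0 to 1 on \<open>[A + 1, A + 2]\<close>.\<close>
lemma smooth_plateau:
  fixes chi :: "real \<Rightarrow> real"
  assumes chi_smooth: "C_inf_on UNIV chi"
    and chi0: "\<forall>t. t < A + 1 \<longrightarrow> chi t = 0"
    and chi1: "\<forall>t. A + 2 < t \<longrightarrow> chi t = 1"
    and u: "u < u0" and v: "v0 < v"
  shows "\<exists>psi. smooth psi \<and> (\<forall>t\<in>{u0..v0}. psi t = 1) \<and> (\<forall>t. t \<notin> {u..v} \<longrightarrow> psi t = 0)"
proof -
  define h where "h = min (u0 - u) (v - v0) / 2"
  have h: "0 < h" "2 * h \<le> u0 - u" "2 * h \<le> v - v0" using u v by (auto simp: h_def)
  define psi where "psi t = complex_of_real (chi ((A + 1 - u / h) + (1 / h) * t)) *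
                             complex_of_real (chi ((A + 1 + v / h) + (- 1 / h) * t))" for t
  have psi_eq: "psi t = complex_of_real (chi (A + 1 + (t - u) / h)) *
                        complex_of_real (chi (A + 1 + (v - t) / h))" for t
    by (simp add: psi_def diff_divide_distrib algebra_simps)
  have "smooth psi" unfolding psi_def[abs_def]
    by (intro smooth_mult smooth_affine_comp chi_smooth)
  moreover have "psi t = 1" if t: "t \<in> {u0..v0}" for t
  proof -
    have "2 \<le> (t - u) / h" "2 \<le> (v - t) / h" using t h by (auto simp: le_divide_eq)
    then show ?thesis unfolding psi_eq using chi1 by simp
  qed
  moreover have "psi t = 0" if t: "t \<notin> {u..v}" for t
  proof (cases "t < u")
    case True
    then have "(t - u) / h < 0" using h by (simp add: divide_neg_pos)
    then show ?thesis unfolding psi_eq using chi0 by simp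
  next
    case False
    then have "(v - t) / h < 0" using t h by (simp add: divide_neg_pos)
    then show ?thesis unfolding psi_eq using chi0 by simp
  qed
  ultimately show ?thesis by blast
qed


section \<open>The spectral data \<open>\<xi>\<^sub>l\<close>, \<open>q\<^sub>l\<close> and \<open>F\<^sup>-\<close> on the real axis\<close>

lemma psqrt_of_real: "psqrt (complex_of_real r) =
   (if 0 \<le> r then complex_of_real (sqrt r) else - \<i> * complex_of_real (sqrt (- r)))"
  by (auto simp: psqrt_def csqrt_of_real)

lemma xi_of_real: "xi c a l (complex_of_real lam) =
   (if 0 \<le> (lam - a l) / c l then complex_of_real (sqrt ((lam - a l) / c l))
    else - \<i> * complex_of_real (sqrt (- ((lam - a l) / c l))))"
proof -
  have "(complex_of_real lam - complex_of_real (a l)) / complex_of_real (c l) =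
      complex_of_real ((lam - a l) / c l)"
    by simp
  then show ?thesis unfolding xi_def psqrt_of_real[symmetric] by simp
qed

lemma xi_measurable: "(\<lambda>lam. xi c a l (complex_of_real lam)) \<in> borel_measurable borel"
  unfolding xi_of_real by measurable

lemma Re_xi_nonneg: "0 \<le> Re (xi c a l (complex_of_real lam))"
  unfolding xi_of_real by auto

lemma Im_xi_nonpos: "Im (xi c a l (complex_of_real lam)) \<le> 0"
  unfolding xi_of_real by auto

lemma xi_above: "0 < c l \<Longrightarrow> a l \<le> lam \<Longrightarrow>
    xi c a l (complex_of_real lam) = complex_of_real (sqrt ((lam - a l) / c l))"
  unfolding xi_of_real by auto

lemma norm_xi: "0 < c l \<Longrightarrow> cmod (xi c a l (complex_of_real lam)) = sqrt (\<bar>lam - a l\<bar> / c l)"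
  unfolding xi_of_real
  by (auto simp: norm_mult abs_div zero_le_divide_iff abs_of_nonneg abs_of_neg minus_divide_left)

text \<open>Each term \<open>c\<^sub>j Re \<xi>\<^sub>j\<close> is dominated by \<open>|w|\<close>, since all the terms \<open>c\<^sub>l \<xi>\<^sub>l\<close> lie in the
  closed right half plane.\<close>
lemma wfun_ge:
  assumes c: "\<forall>l\<in>{1..n}. 0 < c l" and j: "j \<in> {1..n}"
  shows "c j * Re (xi c a j (complex_of_real lam)) \<le> cmod (wfun n c a lam)"
proof -
  have "c j * Re (xi c a j (complex_of_real lam)) \<le> (\<Sum>l\<in>{1..n}. c l * Re (xi c a l (complex_of_real lam)))"
    using c j by (intro member_le_sum) (auto intro!: mult_nonneg_nonneg Re_xi_nonneg simp: order.strict_implies_order)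
  also have "\<dots> = Re (\<Sum>l\<in>{1..n}. complex_of_real (c l) * xi c a l (complex_of_real lam))"
    by (simp add: Re_sum)
  also have "\<dots> \<le> cmod (\<Sum>l\<in>{1..n}. complex_of_real (c l) * xi c a l (complex_of_real lam))"
    by (rule complex_Re_le_cmod)
  also have "\<dots> = cmod (wfun n c a lam)"
    by (simp add: wfun_def norm_mult)
  finally show ?thesis .
qed

lemma qfun_nonneg: "0 < c j \<Longrightarrow> 0 \<le> qfun n c a j lam"
  unfolding qfun_def by (auto intro!: divide_nonneg_nonneg mult_nonneg_nonneg Re_xi_nonneg)

lemma qfun_measurable: "qfun n c a j \<in> borel_measurable borel"
proof -
  have "(\<lambda>lam. wfun n c a lam) \<in> borel_measurable borel"
    unfolding wfun_def using xi_measurable by measurable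
  then show ?thesis unfolding qfun_def[abs_def] using xi_measurable by measurable
qed

text \<open>Away from the threshold \<open>a\<^sub>j\<close> the weight \<open>q\<^sub>j\<close> is bounded: \<open>q\<^sub>j \<le> 1 / (\<pi> c\<^sub>j \<xi>\<^sub>j)\<close>.\<close>
lemma qfun_bound:
  assumes c: "\<forall>l\<in>{1..n}. 0 < c l" and j: "j \<in> {1..n}" and al: "a j < al" and lam: "al \<le> lam"
  shows "qfun n c a j lam \<le> 1 / (pi * c j * sqrt ((al - a j) / c j))"
proof -
  have cj: "0 < c j" using c j by auto
  define r where "r = sqrt ((lam - a j) / c j)"
  define r0 where "r0 = sqrt ((al - a j) / c j)"
  have r0: "0 < r0" using al cj by (simp add: r0_def)
  have rr0: "r0 \<le> r" unfolding r_def r0_def using lam cj by (auto intro!: divide_right_mono)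
  have xi: "xi c a j (complex_of_real lam) = complex_of_real r"
    using xi_above[of c j a lam, OF cj] al lam by (simp add: r_def)
  have w: "c j * r \<le> cmod (wfun n c a lam)" using wfun_ge[OF c j, of a lam] xi by simp
  have pos: "0 < c j * r" using cj r0 rr0 by simp
  have "qfun n c a j lam = c j * r / (pi * (cmod (wfun n c a lam))\<^sup>2)"
    unfolding qfun_def using al lam xi by simp
  also have "\<dots> \<le> c j * r / (pi * (c j * r)\<^sup>2)"
    using pos w by (intro divide_left_mono mult_left_mono power_mono mult_pos_pos) auto
  also have "\<dots> = 1 / (pi * c j * r)" using pos by (simp add: power2_eq_square field_simps)
  also have "\<dots> \<le> 1 / (pi * c j * r0)"
    using r0 rr0 cj by (intro divide_left_mono mult_left_mono) auto
  finally show ?thesis by (simp add: r0_def)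
qed

lemma Fminus_measurable: "(\<lambda>lam. Fminus n c a j (complex_of_real lam) k x) \<in> borel_measurable borel"
proof -
  have cont: "continuous_on UNIV (cos :: complex \<Rightarrow> complex)" "continuous_on UNIV (sin :: complex \<Rightarrow> complex)"
     "continuous_on UNIV (exp :: complex \<Rightarrow> complex)"
    by (auto intro!: continuous_intros)
  have "(\<lambda>lam. s_coef n c a j (complex_of_real lam)) \<in> borel_measurable borel"
    unfolding s_coef_def using xi_measurable by measurable
  moreover have "(\<lambda>lam. cos (xi c a j (complex_of_real lam) * complex_of_real x)) \<in> borel_measurable borel"
    by (rule borel_measurable_continuous_on[OF cont(1)]) (use xi_measurable in measurable)
  moreover have "(\<lambda>lam. sin (xi c a j (complex_of_real lam) * complex_of_real x)) \<in> borel_measurable borel"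
    by (rule borel_measurable_continuous_on[OF cont(2)]) (use xi_measurable in measurable)
  moreover have "(\<lambda>lam. exp (- \<i> * xi c a k (complex_of_real lam) * complex_of_real x)) \<in> borel_measurable borel"
    by (rule borel_measurable_continuous_on[OF cont(3)]) (use xi_measurable in measurable)
  ultimately show ?thesis unfolding Fminus_def by measurable
qed

text \<open>On a compact interval \<open>[al, be]\<close> strictly above \<open>a\<^sub>j\<close> the coefficient \<open>s\<^sub>j\<close> is bounded:
  its numerator is bounded and its denominator \<open>c\<^sub>j \<xi>\<^sub>j\<close> stays away from 0.\<close>
lemma s_coef_bound:
  assumes c: "\<forall>l\<in>{1..n}. 0 < c l" and j: "j \<in> {1..n}" and al: "a j < al"
    and lam: "al \<le> lam" "lam \<le> be"
  shows "cmod (s_coef n c a j (complex_of_real lam)) \<le>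
    (\<Sum>l\<in>{1..n}. c l * sqrt ((\<bar>al\<bar> + \<bar>be\<bar> + \<bar>a l\<bar>) / c l)) / (c j * sqrt ((al - a j) / c j))"
proof -
  define S where "S = (\<Sum>l\<in>{1..n}. c l * sqrt ((\<bar>al\<bar> + \<bar>be\<bar> + \<bar>a l\<bar>) / c l))"
  define d where "d = c j * sqrt ((al - a j) / c j)"
  have cj: "0 < c j" using c j by auto
  define r where "r = sqrt ((lam - a j) / c j)"
  have rd: "d \<le> c j * r" unfolding r_def d_def using lam cj by (auto intro!: divide_right_mono)
  have dpos: "0 < d" using cj al by (simp add: d_def)
  have xi: "xi c a j (complex_of_real lam) = complex_of_real r"
    using xi_above[of c j a lam, OF cj] al lam by (simp add: r_def)
  have term_bound: "cmod (complex_of_real (c l) * xi c a l (complex_of_real lam))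
      \<le> c l * sqrt ((\<bar>al\<bar> + \<bar>be\<bar> + \<bar>a l\<bar>) / c l)" if l: "l \<in> {1..n}" for l
  proof -
    have cl: "0 < c l" using c l by auto
    then have "cmod (complex_of_real (c l) * xi c a l (complex_of_real lam)) = c l * sqrt (\<bar>lam - a l\<bar> / c l)"
      by (simp add: norm_mult norm_xi)
    also have "\<dots> \<le> c l * sqrt ((\<bar>al\<bar> + \<bar>be\<bar> + \<bar>a l\<bar>) / c l)"
      using cl lam by (intro mult_left_mono real_sqrt_le_mono divide_right_mono) auto
    finally show ?thesis .
  qed
  have "cmod (\<Sum>l\<in>{1..n} - {j}. complex_of_real (c l) * xi c a l (complex_of_real lam))
      \<le> (\<Sum>l\<in>{1..n} - {j}. c l * sqrt ((\<bar>al\<bar> + \<bar>be\<bar> + \<bar>a l\<bar>) / c l))"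
    using term_bound by (intro order_trans[OF norm_sum] sum_mono) auto
  also have "\<dots> \<le> S"
    unfolding S_def using c
    by (intro sum_mono2) (auto intro!: mult_nonneg_nonneg divide_nonneg_nonneg simp: order.strict_implies_order)
  finally have num: "cmod (\<Sum>l\<in>{1..n} - {j}. complex_of_real (c l) * xi c a l (complex_of_real lam)) \<le> S" .
  have "0 \<le> r" using lam al cj by (simp add: r_def)
  then have "cmod (s_coef n c a j (complex_of_real lam)) =
      cmod (\<Sum>l\<in>{1..n} - {j}. complex_of_real (c l) * xi c a l (complex_of_real lam)) / (c j * r)"
    using cj by (simp add: s_coef_def xi norm_divide norm_mult)
  also have "\<dots> \<le> S / d"
    using num rd dpos order_trans[OF norm_ge_zero num] by (intro frac_le) auto
  finally show ?thesis by (simp add: S_def d_def)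
qed

lemma Fminus_bound:
  assumes c: "\<forall>l\<in>{1..n}. 0 < c l" and j: "j \<in> {1..n}" and al: "a j < al"
    and lam: "al \<le> lam" "lam \<le> be" and x: "0 \<le> x"
  shows "cmod (Fminus n c a j (complex_of_real lam) k x) \<le>
    1 + (\<Sum>l\<in>{1..n}. c l * sqrt ((\<bar>al\<bar> + \<bar>be\<bar> + \<bar>a l\<bar>) / c l)) / (c j * sqrt ((al - a j) / c j))"
    (is "_ \<le> 1 + ?B")
proof -
  have cj: "0 < c j" using c j by auto
  have "0 \<le> ?B"
    using c j al by (intro divide_nonneg_nonneg sum_nonneg mult_nonneg_nonneg)
      (auto simp: order.strict_implies_order)
  show ?thesis
  proof (cases "k = j")
    case False
    have "cmod (Fminus n c a j (complex_of_real lam) k x) = exp (Im (xi c a k (complex_of_real lam)) * x)"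
      using False by (simp add: Fminus_def)
    also have "\<dots> \<le> 1" using Im_xi_nonpos[of c a k lam] x by (simp add: mult_nonpos_nonneg)
    finally show ?thesis using \<open>0 \<le> ?B\<close> by linarith
  next
    case True
    define r where "r = sqrt ((lam - a j) / c j)"
    have xi: "xi c a j (complex_of_real lam) = complex_of_real r"
      using xi_above[of c j a lam, OF cj] al lam by (simp add: r_def)
    have cos_bound: "cmod (cos (complex_of_real r * complex_of_real x)) \<le> 1"
      by (metis abs_cos_le_one cos_of_real norm_of_real of_real_mult)
    have sin_bound: "cmod (sin (complex_of_real r * complex_of_real x)) \<le> 1"
      by (metis abs_sin_le_one sin_of_real norm_of_real of_real_mult)
    have "cmod (Fminus n c a j (complex_of_real lam) k x) \<le>
        cmod (cos (complex_of_real r * complex_of_real x)) +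
        cmod (s_coef n c a j (complex_of_real lam)) * cmod (sin (complex_of_real r * complex_of_real x))"
      using True norm_triangle_ineq4[of "cos (complex_of_real r * complex_of_real x)"
          "\<i> * s_coef n c a j (complex_of_real lam) * sin (complex_of_real r * complex_of_real x)"]
      by (simp add: Fminus_def xi norm_mult)
    also have "\<dots> \<le> 1 + ?B * 1"
      using cos_bound sin_bound s_coef_bound[of n c j a al lam be, OF c j al lam] \<open>0 \<le> ?B\<close>
      by (intro add_mono mult_mono) auto
    finally show ?thesis by simp
  qed
qed


section \<open>Approximation in weighted \<open>L\<^sup>2\<close> spaces\<close>

lemma weighted_L2_compact_support:
  fixes q :: "real \<Rightarrow> real" and h :: "real \<Rightarrow> complex"
  assumes qm: "q \<in> borel_measurable borel" and qnn: "\<And>l. 0 \<le> q l"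
    and qb: "\<And>l. l \<in> {u..v} \<Longrightarrow> q l \<le> Q"
    and hm: "h \<in> borel_measurable borel"
    and hb: "\<And>l. l \<in> {u..v} \<Longrightarrow> cmod (h l) \<le> B" and hz: "\<And>l. l \<notin> {u..v} \<Longrightarrow> h l = 0"
    and uv: "u \<le> v"
  shows "integrable lborel (\<lambda>l. q l * (cmod (h l))\<^sup>2)"
    and "(\<integral>l. q l * (cmod (h l))\<^sup>2 \<partial>lborel) \<le> Q * B\<^sup>2 * (v - u)"
proof -
  define w where "w l = indicator {u..v} l * (Q * B\<^sup>2)" for l :: real
  have w_int: "integrable lborel w"
    unfolding w_def by (intro integrable_mult_left integrable_real_indicator) (auto simp: emeasure_lborel_Icc_eq)
  have bound: "q l * (cmod (h l))\<^sup>2 \<le> w l" for l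
  proof (cases "l \<in> {u..v}")
    case True
    have "0 \<le> B" using hb[OF True] norm_ge_zero order_trans by blast
    then have "(cmod (h l))\<^sup>2 \<le> B\<^sup>2" using hb[OF True] by (intro power_mono) auto
    then show ?thesis using True qb[OF True] qnn[of l] by (simp add: w_def mult_mono)
  qed (simp add: w_def hz)
  show int: "integrable lborel (\<lambda>l. q l * (cmod (h l))\<^sup>2)"
    by (rule Bochner_Integration.integrable_bound[OF w_int])
      (use qm hm bound qnn in \<open>auto intro!: AE_I2 order_trans[OF _ abs_ge_self]\<close>)
  have "(\<integral>l. q l * (cmod (h l))\<^sup>2 \<partial>lborel) \<le> integral\<^sup>L lborel w"
    by (rule integral_mono[OF int w_int bound])
  also have "\<dots> = Q * B\<^sup>2 * (v - u)" using uv by (simp add: w_def[abs_def])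
  finally show "(\<integral>l. q l * (cmod (h l))\<^sup>2 \<partial>lborel) \<le> Q * B\<^sup>2 * (v - u)" .
qed

lemma weighted_L2_dominated_convergence:
  fixes q :: "real \<Rightarrow> real" and h :: "nat \<Rightarrow> real \<Rightarrow> complex"
  assumes qm: "q \<in> borel_measurable borel" and qnn: "\<And>l. 0 \<le> q l"
    and qb: "\<And>l. l \<in> {u..v} \<Longrightarrow> q l \<le> Q"
    and hm: "\<And>m. h m \<in> borel_measurable borel"
    and hb: "\<And>m l. l \<in> {u..v} \<Longrightarrow> cmod (h m l) \<le> B" and hz: "\<And>m l. l \<notin> {u..v} \<Longrightarrow> h m l = 0"
    and lim: "AE l in lborel. (\<lambda>m. h m l) \<longlonglongrightarrow> 0"
    and uv: "u \<le> v"
  shows "(\<lambda>m. \<integral>l. q l * (cmod (h m l))\<^sup>2 \<partial>lborel) \<longlonglongrightarrow> 0"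
proof -
  define w where "w l = indicator {u..v} l * (Q * B\<^sup>2)" for l :: real
  have "integrable lborel w"
    unfolding w_def by (intro integrable_mult_left integrable_real_indicator) (auto simp: emeasure_lborel_Icc_eq)
  moreover have "AE l in lborel. norm (q l * (cmod (h m l))\<^sup>2) \<le> w l" for m
  proof (intro AE_I2)
    fix l
    show "norm (q l * (cmod (h m l))\<^sup>2) \<le> w l"
    proof (cases "l \<in> {u..v}")
      case True
      have "0 \<le> B" using hb[OF True] norm_ge_zero order_trans by blast
      then have "(cmod (h m l))\<^sup>2 \<le> B\<^sup>2" using hb[OF True] by (intro power_mono) auto
      then show ?thesis using True qb[OF True] qnn[of l] by (simp add: w_def mult_mono)
    qed (simp add: w_def hz)
  qed
  moreover have "AE l in lborel. (\<lambda>m. q l * (cmod (h m l))\<^sup>2) \<longlonglongrightarrow> 0"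
  proof (rule AE_mp[OF lim], intro AE_I2 impI)
    fix l assume "(\<lambda>m. h m l) \<longlonglongrightarrow> 0"
    from tendsto_mult[OF tendsto_const[of "q l"] tendsto_power[OF tendsto_norm[OF this], of 2]]
    show "(\<lambda>m. q l * (cmod (h m l))\<^sup>2) \<longlonglongrightarrow> 0" by simp
  qed
  ultimately have "(\<lambda>m. \<integral>l. q l * (cmod (h m l))\<^sup>2 \<partial>lborel) \<longlonglongrightarrow> integral\<^sup>L lborel (\<lambda>l::real. 0::real)"
    by (intro Bochner_Integration.integral_dominated_convergence[where w = w]) (use qm hm in auto)
  then show ?thesis by simp
qed

lemma weighted_L2_truncation:
  fixes g :: "real \<Rightarrow> complex" and q :: "real \<Rightarrow> real"
  assumes gm: "g \<in> borel_measurable borel"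
    and g_int: "integrable lborel (\<lambda>l. q l * (cmod (g l))\<^sup>2)"
    and qm: "q \<in> borel_measurable borel" and qnn: "\<And>l. 0 \<le> q l"
    and e: "0 < e"
  shows "\<exists>M::real. 0 \<le> M \<and>
     integrable lborel (\<lambda>l. q l * (cmod (g l - (if cmod (g l) \<le> M then g l else 0)))\<^sup>2) \<and>
     (\<integral>l. q l * (cmod (g l - (if cmod (g l) \<le> M then g l else 0)))\<^sup>2 \<partial>lborel) < e"
proof -
  define s where "s M l = q l * (cmod (g l - (if cmod (g l) \<le> real M then g l else 0)))\<^sup>2" for M :: nat and l
  have sm: "s M \<in> borel_measurable lborel" for M
    unfolding s_def[abs_def] using gm qm by measurable
  have lim: "AE l in lborel. (\<lambda>M. s M l) \<longlonglongrightarrow> 0"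
  proof (intro AE_I2)
    fix l
    obtain M0 :: nat where "cmod (g l) \<le> real M0" using real_arch_simple by blast
    then have "\<forall>M\<ge>M0. s M l = 0" unfolding s_def by auto
    then show "(\<lambda>M. s M l) \<longlonglongrightarrow> 0"
      by (intro tendsto_eventually) (auto simp: eventually_sequentially)
  qed
  have bound: "AE l in lborel. norm (s M l) \<le> q l * (cmod (g l))\<^sup>2" for M
    unfolding s_def using qnn by (intro AE_I2) (auto intro!: mult_left_mono simp: abs_mult)
  have "(\<lambda>M. integral\<^sup>L lborel (s M)) \<longlonglongrightarrow> integral\<^sup>L lborel (\<lambda>l::real. 0::real)"
    by (rule Bochner_Integration.integral_dominated_convergence[where w="\<lambda>l. q l * (cmod (g l))\<^sup>2"])
      (use sm g_int lim bound in auto)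
  then have "eventually (\<lambda>M. integral\<^sup>L lborel (s M) < e) sequentially"
    using e by (intro order_tendstoD(2)) auto
  then obtain M where M: "integral\<^sup>L lborel (s M) < e"
    unfolding eventually_sequentially by blast
  have "integrable lborel (s M)"
    by (rule Bochner_Integration.integrable_dominated_convergence2[where w="\<lambda>l. q l * (cmod (g l))\<^sup>2"])
      (use sm g_int lim bound in auto)
  with M show ?thesis
    by (intro exI[of _ "real M"] conjI) (auto simp: s_def[abs_def])
qed

text \<open>Moving averages \<open>x \<mapsto> h\<^sup>-\<^sup>1 \<integral>\<^sub>x\<^sup>x\<^sup>+\<^sup>h f\<close> of a locally integrable function are continuous:
  locally they are difference quotients of an indefinite integral.\<close>
lemma moving_average_continuous:
  fixes f :: "real \<Rightarrow> complex"
  assumes f_int: "\<And>a b. f integrable_on {a..b}" and h: "0 < h"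
  shows "continuous_on UNIV (\<lambda>x. integral {x..x + h} f /\<^sub>R h)"
proof -
  have "continuous (at x) (\<lambda>x. integral {x..x + h} f /\<^sub>R h)" for x
  proof -
    have eq: "integral {y..y + h} f = integral {x - 2..y + h} f - integral {x - 2..y} f"
      if "y \<in> {x - 1..x + 1}" for y
    proof -
      have "integral {x - 2..y} f + integral {y..y + h} f = integral {x - 2..y + h} f"
        by (rule Henstock_Kurzweil_Integration.integral_combine) (use that h f_int in auto)
      then show ?thesis by (metis add_diff_cancel_left')
    qed
    have I: "continuous_on {x - 2..x + 1 + h} (\<lambda>y. integral {x - 2..y} f)"
      by (rule indefinite_integral_continuous_1[OF f_int])
    have "continuous_on {x - 1..x + 1} (\<lambda>y. (integral {x - 2..y + h} f - integral {x - 2..y} f) /\<^sub>R h)"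
      using h by (intro continuous_intros continuous_on_compose2[OF I] continuous_on_subset[OF I]) auto
    then have "continuous_on {x - 1..x + 1} (\<lambda>y. integral {y..y + h} f /\<^sub>R h)"
      by (rule continuous_on_eq) (simp only: eq)
    then show ?thesis by (rule continuous_on_interior) auto
  qed
  then show ?thesis by (simp add: continuous_at_imp_continuous_on)
qed

lemma moving_average_tendsto_ae:
  fixes f :: "real \<Rightarrow> complex"
  assumes f_int: "\<And>a b. f integrable_on {a..b}"
  shows "AE x in lborel. (\<lambda>m. integral {x..x + 1 / Suc m} f /\<^sub>R (1 / Suc m)) \<longlonglongrightarrow> f x"
proof -
  obtain N where N: "negligible N" and
     conv: "\<And>x e. \<lbrakk>x \<notin> N; 0 < e\<rbrakk> \<Longrightarrow>
               \<exists>d>0. \<forall>h. 0 < h \<and> h < d \<longrightarrow>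
                         norm (integral (cbox x (x + h *\<^sub>R One)) f /\<^sub>R h ^ DIM(real) - f x) < e"
    using integrable_ccontinuous_explicit[of f] f_int by (metis cbox_interval)
  have "(\<lambda>m. integral {x..x + 1 / Suc m} f /\<^sub>R (1 / Suc m)) \<longlonglongrightarrow> f x" if xN: "x \<notin> N" for x
  proof (rule LIMSEQ_I)
    fix e :: real assume e: "0 < e"
    from conv[OF xN e] obtain d where d: "d > 0" and dd: "\<And>h. 0 < h \<and> h < d \<Longrightarrow>
        norm (integral (cbox x (x + h *\<^sub>R One)) f /\<^sub>R h ^ DIM(real) - f x) < e"
      by blast
    obtain m0 :: nat where m0: "1 / d < real m0" using reals_Archimedean2 by auto
    have "norm (integral {x..x + 1 / Suc m} f /\<^sub>R (1 / Suc m) - f x) < e" if m: "m0 \<le> m" for m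
    proof -
      have "1 / d < real (Suc m)" using m0 m by linarith
      then have "1 / real (Suc m) < d" using d by (simp add: field_simps)
      then show ?thesis using dd[of "1 / real (Suc m)"] by (simp add: cbox_interval)
    qed
    then show "\<exists>no. \<forall>m\<ge>no. norm (integral {x..x + 1 / Suc m} f /\<^sub>R (1 / Suc m) - f x) < e" by blast
  qed
  moreover obtain N' where N': "N' \<in> null_sets lborel" "N \<subseteq> N'"
    using N by (auto simp: negligible_iff_null_sets null_sets_completion_iff2)
  ultimately show ?thesis
    using AE_not_in[OF N'(1)] by (auto elim!: eventually_mono simp: subset_eq)
qed

lemma moving_averages:
  fixes f :: "real \<Rightarrow> complex"
  assumes fm: "f \<in> borel_measurable borel" and fb: "\<And>x. cmod (f x) \<le> M"
    and fz: "\<And>x. x \<notin> {u..v} \<Longrightarrow> f x = 0"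
  shows "\<exists>A. (\<forall>m. continuous_on UNIV (A m)) \<and> (\<forall>m x. cmod (A m x) \<le> M)
     \<and> (AE x in lborel. (\<lambda>m. A m x) \<longlonglongrightarrow> f x)"
proof -
  have M0: "0 \<le> M" using fb[of 0] norm_ge_zero[of "f 0"] by linarith
  have "integrable lborel (\<lambda>x. indicator {u..v} x * M)"
    by (intro integrable_mult_left integrable_real_indicator) (auto simp: emeasure_lborel_Icc_eq)
  then have "integrable lborel f"
    by (rule Bochner_Integration.integrable_bound) (use fm fb fz M0 in \<open>auto simp: indicator_def\<close>)
  then have f_int: "f integrable_on {a..b}" for a b
    using integrable_on_subinterval[OF integrable_on_lborel] by auto
  define A where "A m x = integral {x..x + 1 / Suc m} f /\<^sub>R (1 / Suc m)" for m x
  have "continuous_on UNIV (A m)" for m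
    unfolding A_def[abs_def] by (rule moving_average_continuous[OF f_int]) simp
  moreover have "cmod (A m x) \<le> M" for m x
  proof -
    define h where "h = 1 / real (Suc m)"
    have h: "0 < h" by (simp add: h_def)
    have "norm (integral {x..x + h} f) \<le> M * h"
      using has_integral_bound[OF M0 integrable_integral[OF f_int[of x "x+h", folded cbox_interval]]] fb h
      by (simp add: cbox_interval)
    moreover have "A m x = integral {x..x + h} f /\<^sub>R h" by (simp add: A_def h_def)
    ultimately show ?thesis using h by (simp add: divide_simps)
  qed
  moreover have "AE x in lborel. (\<lambda>m. A m x) \<longlonglongrightarrow> f x"
    unfolding A_def by (rule moving_average_tendsto_ae[OF f_int])
  ultimately show ?thesis by blast
qed

lemma cmod_sum3_sq: "(cmod (x + y + z))\<^sup>2 \<le> 3 * ((cmod x)\<^sup>2 + (cmod y)\<^sup>2 + (cmod z)\<^sup>2)"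
proof -
  have "cmod (x + y + z) \<le> cmod x + cmod y + cmod z"
    by (metis add_mono norm_triangle_ineq order_trans order_refl)
  then have "(cmod (x + y + z))\<^sup>2 \<le> (cmod x + cmod y + cmod z)\<^sup>2"
    by (intro power_mono) auto
  also have "\<dots> \<le> 3 * ((cmod x)\<^sup>2 + (cmod y)\<^sup>2 + (cmod z)\<^sup>2)"
    using sum_squares_bound[of "cmod x" "cmod y"] sum_squares_bound[of "cmod x" "cmod z"]
      sum_squares_bound[of "cmod y" "cmod z"]
    by (simp add: power2_eq_square algebra_simps)
  finally show ?thesis .
qed

lemma norm_diff_sq_le: "(cmod (x - y))\<^sup>2 \<le> 2 * (cmod x)\<^sup>2 + 2 * (cmod y)\<^sup>2"
proof -
  have "(cmod (x - y))\<^sup>2 \<le> (cmod x + cmod y)\<^sup>2"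
    by (intro power_mono norm_triangle_ineq4) auto
  also have "\<dots> \<le> 2 * (cmod x)\<^sup>2 + 2 * (cmod y)\<^sup>2"
    using sum_squares_bound[of "cmod x" "cmod y"] by (simp add: power2_sum)
  finally show ?thesis .
qed

lemma weighted_L2_triangle3:
  fixes q :: "real \<Rightarrow> real" and g g1 g2 g3 :: "real \<Rightarrow> complex"
  assumes qnn: "\<And>l. 0 \<le> q l" and gm: "(\<lambda>l. q l * (cmod (g l))\<^sup>2) \<in> borel_measurable lborel"
    and g_eq: "AE l in lborel. g l = g1 l + g2 l + g3 l"
    and i1: "integrable lborel (\<lambda>l. q l * (cmod (g1 l))\<^sup>2)"
    and i2: "integrable lborel (\<lambda>l. q l * (cmod (g2 l))\<^sup>2)"
    and i3: "integrable lborel (\<lambda>l. q l * (cmod (g3 l))\<^sup>2)"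
  shows "integrable lborel (\<lambda>l. q l * (cmod (g l))\<^sup>2)"
    and "(\<integral>l. q l * (cmod (g l))\<^sup>2 \<partial>lborel) \<le> 3 * ((\<integral>l. q l * (cmod (g1 l))\<^sup>2 \<partial>lborel)
           + (\<integral>l. q l * (cmod (g2 l))\<^sup>2 \<partial>lborel) + (\<integral>l. q l * (cmod (g3 l))\<^sup>2 \<partial>lborel))"
proof -
  define b where "b l = 3 * (q l * (cmod (g1 l))\<^sup>2 + q l * (cmod (g2 l))\<^sup>2 + q l * (cmod (g3 l))\<^sup>2)" for l
  have b_int: "integrable lborel b" unfolding b_def using i1 i2 i3 by auto
  have bound: "AE l in lborel. q l * (cmod (g l))\<^sup>2 \<le> b l"
    using g_eq
  proof eventually_elim
    case (elim l)
    have "q l * (cmod (g l))\<^sup>2 \<le> q l * (3 * ((cmod (g1 l))\<^sup>2 + (cmod (g2 l))\<^sup>2 + (cmod (g3 l))\<^sup>2))"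
      unfolding elim using qnn[of l] cmod_sum3_sq by (intro mult_left_mono) auto
    then show ?case by (simp add: b_def algebra_simps)
  qed
  show int: "integrable lborel (\<lambda>l. q l * (cmod (g l))\<^sup>2)"
    by (rule Bochner_Integration.integrable_bound[OF b_int gm])
      (use bound qnn in \<open>auto elim!: eventually_mono intro: order_trans[OF _ abs_ge_self]\<close>)
  have "(\<integral>l. q l * (cmod (g l))\<^sup>2 \<partial>lborel) \<le> integral\<^sup>L lborel b"
    by (rule integral_mono_AE[OF int b_int bound])
  then show "(\<integral>l. q l * (cmod (g l))\<^sup>2 \<partial>lborel) \<le> 3 * ((\<integral>l. q l * (cmod (g1 l))\<^sup>2 \<partial>lborel)
           + (\<integral>l. q l * (cmod (g2 l))\<^sup>2 \<partial>lborel) + (\<integral>l. q l * (cmod (g3 l))\<^sup>2 \<partial>lborel))"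
    using i1 i2 i3 by (simp add: b_def[abs_def])
qed

lemma compact_support_bounded:
  fixes f :: "real \<Rightarrow> complex"
  assumes "continuous_on UNIV f" and zero: "\<And>t. t \<notin> {u..v} \<Longrightarrow> f t = 0"
  obtains B where "0 \<le> B" "\<And>t. cmod (f t) \<le> B"
proof -
  have "bounded (f ` {u..v})"
    by (intro compact_imp_bounded compact_continuous_image continuous_on_subset[OF assms(1)]) auto
  then obtain B where "\<And>t. t \<in> {u..v} \<Longrightarrow> cmod (f t) \<le> B" unfolding bounded_iff by blast
  then have "cmod (f t) \<le> max B 0" for t
    using zero[of t] by (cases "t \<in> {u..v}") (auto simp: le_max_iff_disj)
  then show thesis using that[of "max B 0"] by auto
qed

lemma weighted_L2_continuous_approx:
  fixes q :: "real \<Rightarrow> real" and f psi :: "real \<Rightarrow> complex"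
  assumes qm: "q \<in> borel_measurable borel" and qnn: "\<And>l. 0 \<le> q l"
    and qb: "\<And>l. l \<in> {u..v} \<Longrightarrow> q l \<le> Q"
    and fm: "f \<in> borel_measurable borel" and f_bound: "\<And>l. cmod (f l) \<le> M"
    and f_supp: "\<And>l. l \<notin> {u..v} \<Longrightarrow> f l = 0"
    and psim: "psi \<in> borel_measurable borel" and Psi: "\<And>t. cmod (psi t) \<le> Psi" "0 \<le> Psi"
    and psi_supp: "\<And>t. t \<notin> {u..v} \<Longrightarrow> psi t = 0"
    and uv: "u \<le> v" and e: "0 < e"
  shows "\<exists>A. continuous_on UNIV A \<and> integrable lborel (\<lambda>l. q l * (cmod (psi l * (A l - f l)))\<^sup>2)
     \<and> (\<integral>l. q l * (cmod (psi l * (A l - f l)))\<^sup>2 \<partial>lborel) < e"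
proof -
  obtain A where A_cont: "\<And>m. continuous_on UNIV (A m)" and A_bound: "\<And>m x. cmod (A m x) \<le> M"
    and A_lim: "AE x in lborel. (\<lambda>m. A m x) \<longlonglongrightarrow> f x"
    using moving_averages[OF fm f_bound f_supp] by blast
  have Am: "A m \<in> borel_measurable borel" for m by (rule borel_measurable_continuous_onI[OF A_cont])
  have bound: "cmod (psi l * (A m l - f l)) \<le> Psi * (2 * M)" for m l
  proof -
    have "cmod (A m l - f l) \<le> 2 * M"
      using norm_triangle_ineq4[of "A m l" "f l"] A_bound[of m l] f_bound[of l] by linarith
    then show ?thesis using Psi by (simp add: norm_mult mult_mono)
  qed
  have "(\<lambda>m. \<integral>l. q l * (cmod (psi l * (A m l - f l)))\<^sup>2 \<partial>lborel) \<longlonglongrightarrow> 0"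
  proof (rule weighted_L2_dominated_convergence[OF qm qnn qb _ _ _ _ uv])
    show "AE l in lborel. (\<lambda>m. psi l * (A m l - f l)) \<longlonglongrightarrow> 0"
      using A_lim by eventually_elim (rule tendsto_mult_right_zero[OF LIM_zero])
  qed (use psim Am fm bound psi_supp in auto)
  from order_tendstoD(2)[OF this e]
  obtain m where "(\<integral>l. q l * (cmod (psi l * (A m l - f l)))\<^sup>2 \<partial>lborel) < e"
    unfolding eventually_sequentially by blast
  moreover have "integrable lborel (\<lambda>l. q l * (cmod (psi l * (A m l - f l)))\<^sup>2)"
    by (rule weighted_L2_compact_support(1)[OF qm qnn qb _ _ _ uv]) (use psim Am fm bound psi_supp in auto)
  ultimately show ?thesis using A_cont by blast
qed

lemma weighted_L2_polynomial_approx: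
  fixes q :: "real \<Rightarrow> real" and A psi :: "real \<Rightarrow> complex"
  assumes qm: "q \<in> borel_measurable borel" and qnn: "\<And>l. 0 \<le> q l"
    and qb: "\<And>l. l \<in> {u..v} \<Longrightarrow> q l \<le> Q"
    and A_cont: "continuous_on UNIV A"
    and psim: "psi \<in> borel_measurable borel" and Psi: "\<And>t. cmod (psi t) \<le> Psi" "0 \<le> Psi"
    and psi_supp: "\<And>t. t \<notin> {u..v} \<Longrightarrow> psi t = 0"
    and uv: "u \<le> v" and e: "0 < e"
  shows "\<exists>P. polynomial_function P \<and> integrable lborel (\<lambda>l. q l * (cmod (psi l * (P l - A l)))\<^sup>2)
     \<and> (\<integral>l. q l * (cmod (psi l * (P l - A l)))\<^sup>2 \<partial>lborel) < e"
proof -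
  define K where "K = Q * Psi\<^sup>2 * (v - u) + 1"
  have K: "0 < K" using qb[of u] qnn[of u] uv by (simp add: K_def add_nonneg_pos)
  define eta where "eta = sqrt (e / K)"
  have eta: "0 < eta" using e K by (simp add: eta_def)
  have "continuous_on {u..v} A" using A_cont by (rule continuous_on_subset) simp
  from Stone_Weierstrass_polynomial_function[OF compact_Icc this eta]
  obtain P where P: "polynomial_function P" and PA: "\<And>x. x \<in> {u..v} \<Longrightarrow> norm (A x - P x) < eta"
    by (elim exE conjE) blast
  have Pm: "P \<in> borel_measurable borel"
    by (rule borel_measurable_continuous_onI[OF continuous_on_polymonial_function[OF P]])
  have Am: "A \<in> borel_measurable borel" by (rule borel_measurable_continuous_onI[OF A_cont])
  have bound: "cmod (psi l * (P l - A l)) \<le> Psi * eta" if "l \<in> {u..v}" for l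
    using Psi(1)[of l] PA[OF that] Psi(2) by (simp add: norm_mult norm_minus_commute mult_mono)
  have int: "integrable lborel (\<lambda>l. q l * (cmod (psi l * (P l - A l)))\<^sup>2)"
    and le: "(\<integral>l. q l * (cmod (psi l * (P l - A l)))\<^sup>2 \<partial>lborel) \<le> Q * (Psi * eta)\<^sup>2 * (v - u)"
    by (rule weighted_L2_compact_support[OF qm qnn qb _ bound _ uv]; use psim Am Pm psi_supp in simp)+
  have "Q * (Psi * eta)\<^sup>2 * (v - u) = (K - 1) * (e / K)"
    using e K by (simp add: K_def eta_def power_mult_distrib)
  also have "\<dots> < e" using e K by (simp add: field_simps)
  finally have "(\<integral>l. q l * (cmod (psi l * (P l - A l)))\<^sup>2 \<partial>lborel) < e" using le by linarith
  then show ?thesis using P int by blast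
qed

text \<open>Density: a weighted \<open>L\<^sup>2\<close> function vanishing outside \<open>[u0, v0]\<close> is approximated by
  \<open>psi P\<close>, where \<open>psi\<close> is a fixed smooth plateau function around \<open>[u0, v0]\<close> and \<open>P\<close> a polynomial:
  truncate, approximate by continuous functions, and these by polynomials.\<close>
lemma weighted_L2_plateau_polynomial_approx:
  fixes g :: "real \<Rightarrow> complex" and q :: "real \<Rightarrow> real" and psi :: "real \<Rightarrow> complex"
  assumes gm: "g \<in> borel_measurable borel"
    and g_int: "integrable lborel (\<lambda>l. q l * (cmod (g l))\<^sup>2)"
    and qm: "q \<in> borel_measurable borel" and qnn: "\<And>l. 0 \<le> q l"
    and qb: "\<And>l. l \<in> {u..v} \<Longrightarrow> q l \<le> Q"
    and g_supp: "AE l in lborel. l \<notin> {u0..v0} \<longrightarrow> g l = 0"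
    and sub: "u \<le> u0" "v0 \<le> v" and uv: "u \<le> v"
    and psi: "smooth psi" "\<And>t. t \<in> {u0..v0} \<Longrightarrow> psi t = 1" "\<And>t. t \<notin> {u..v} \<Longrightarrow> psi t = 0"
    and e: "0 < e"
  shows "\<exists>P. polynomial_function P \<and> integrable lborel (\<lambda>l. q l * (cmod (psi l * P l - g l))\<^sup>2)
     \<and> (\<integral>l. q l * (cmod (psi l * P l - g l))\<^sup>2 \<partial>lborel) < e"
proof -
  obtain Psi where Psi: "0 \<le> Psi" "\<And>t. cmod (psi t) \<le> Psi"
    using compact_support_bounded[OF smooth_continuous_on[OF psi(1)] psi(3)] by blast
  have psim: "psi \<in> borel_measurable borel"
    by (rule borel_measurable_continuous_onI[OF smooth_continuous_on[OF psi(1)]])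
  have e9: "0 < e / 9" using e by simp
  obtain M where M0: "0 \<le> M" and
    trunc_int: "integrable lborel (\<lambda>l. q l * (cmod (g l - (if cmod (g l) \<le> M then g l else 0)))\<^sup>2)" and
    trunc_small: "(\<integral>l. q l * (cmod (g l - (if cmod (g l) \<le> M then g l else 0)))\<^sup>2 \<partial>lborel) < e / 9"
    using weighted_L2_truncation[OF gm g_int qm qnn e9] by blast
  define f where "f l = (if l \<in> {u0..v0} \<and> cmod (g l) \<le> M then g l else 0)" for l
  have fm: "f \<in> borel_measurable borel" unfolding f_def[abs_def] using gm by measurable
  have psi_f: "psi l * f l = f l" for l by (cases "l \<in> {u0..v0}") (auto simp: psi(2) f_def)
  have f_bound: "cmod (f l) \<le> M" for l using M0 by (simp add: f_def)
  have f_supp: "f l = 0" if "l \<notin> {u..v}" for l using that sub by (auto simp: f_def)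
  obtain A where A: "continuous_on UNIV A"
    and avg_int: "integrable lborel (\<lambda>l. q l * (cmod (psi l * (A l - f l)))\<^sup>2)"
    and avg_small: "(\<integral>l. q l * (cmod (psi l * (A l - f l)))\<^sup>2 \<partial>lborel) < e / 9"
    using weighted_L2_continuous_approx[OF qm qnn qb fm f_bound f_supp psim Psi(2,1) psi(3) uv e9] by blast
  obtain P where P: "polynomial_function P"
    and poly_int: "integrable lborel (\<lambda>l. q l * (cmod (psi l * (P l - A l)))\<^sup>2)"
    and poly_small: "(\<integral>l. q l * (cmod (psi l * (P l - A l)))\<^sup>2 \<partial>lborel) < e / 9"
    using weighted_L2_polynomial_approx[OF qm qnn qb A psim Psi(2,1) psi(3) uv e9] by blast
  have "AE l in lborel. f l = (if cmod (g l) \<le> M then g l else 0)"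
    using g_supp by eventually_elim (auto simp: f_def M0)
  then have decomposition: "AE l in lborel. psi l * P l - g l = psi l * (P l - A l) + psi l * (A l - f l)
      + - (g l - (if cmod (g l) \<le> M then g l else 0))"
  proof eventually_elim
    case (elim l)
    have "psi l * (A l - f l) = psi l * A l - f l" unfolding right_diff_distrib psi_f ..
    then show ?case using elim by (simp add: algebra_simps)
  qed
  have error_meas: "(\<lambda>l. q l * (cmod (psi l * P l - g l))\<^sup>2) \<in> borel_measurable lborel"
    using qm psim borel_measurable_continuous_onI[OF continuous_on_polymonial_function[OF P]] gm
    by measurable
  have trunc_int': "integrable lborel
      (\<lambda>l. q l * (cmod (- (g l - (if cmod (g l) \<le> M then g l else 0))))\<^sup>2)"
    using trunc_int by (simp only: norm_minus_cancel)
  note triangle = weighted_L2_triangle3[OF qnn error_meas decomposition poly_int avg_int trunc_int']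
  have sum_small: "x < e" if "x \<le> 3 * (a + b + c)" "a < e / 9" "b < e / 9" "c < e / 9" for x a b c :: real
    using that e by (simp add: field_simps)
  have "(\<integral>l. q l * (cmod (psi l * P l - g l))\<^sup>2 \<partial>lborel) < e"
    by (rule sum_small[OF triangle(2)[unfolded norm_minus_cancel] poly_small avg_small trunc_small])
  then show ?thesis using P triangle(1) by blast
qed

section \<open>Convergence of weighted pairings\<close>

lemma amgm_scaled: "0 < (t::real) \<Longrightarrow> x * y \<le> (x\<^sup>2 / t + t * y\<^sup>2) / 2"
proof -
  assume t: "0 < t"
  have "0 \<le> (x - t * y)\<^sup>2" by simp
  then have "2 * t * (x * y) \<le> x\<^sup>2 + t\<^sup>2 * y\<^sup>2" by (simp add: power2_eq_square algebra_simps)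
  then show ?thesis using t by (simp add: field_simps power2_eq_square)
qed

text \<open>The pairing \<open>\<integral> q H F\<close> of a weighted \<open>L\<^sup>2\<close> function \<open>H\<close>, vanishing outside \<open>[u, v]\<close>, with a
  function \<open>F\<close> bounded on \<open>[u, v]\<close> exists, and is controlled by the weighted norm of \<open>H\<close>
  (a Cauchy--Schwarz estimate with a free parameter \<open>t\<close>).\<close>
lemma weighted_pairing_bound:
  fixes q :: "real \<Rightarrow> real" and H F :: "real \<Rightarrow> complex"
  assumes qm: "q \<in> borel_measurable borel" and qnn: "\<And>l. 0 \<le> q l"
    and qb: "\<And>l. l \<in> {u..v} \<Longrightarrow> q l \<le> Q"
    and Fm: "F \<in> borel_measurable borel" and Fb: "\<And>l. l \<in> {u..v} \<Longrightarrow> cmod (F l) \<le> B"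
    and Hm: "H \<in> borel_measurable borel" and Hz: "AE l in lborel. l \<notin> {u..v} \<longrightarrow> H l = 0"
    and Hi: "integrable lborel (\<lambda>l. q l * (cmod (H l))\<^sup>2)"
    and uv: "u \<le> v" and t: "0 < t"
  shows "integrable lborel (\<lambda>l. complex_of_real (q l) * H l * F l)"
    and "norm (\<integral>l. complex_of_real (q l) * H l * F l \<partial>lborel)
           \<le> (\<integral>l. q l * (cmod (H l))\<^sup>2 \<partial>lborel) / (2 * t) + t * ((v - u) * Q * B\<^sup>2) / 2"
proof -
  define b where "b l = (q l * (cmod (H l))\<^sup>2 / t + t * (indicator {u..v} l * (Q * B\<^sup>2))) / 2" for l
  have b_int: "integrable lborel b"
    unfolding b_def using Hi
    by (intro integrable_divide integrable_add integrable_divide integrable_mult_right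
        integrable_mult_left integrable_real_indicator) (auto simp: emeasure_lborel_Icc_eq)
  have bound: "AE l in lborel. norm (complex_of_real (q l) * H l * F l) \<le> b l"
    using Hz
  proof eventually_elim
    case (elim l)
    show ?case
    proof (cases "l \<in> {u..v}")
      case True
      have "(cmod (F l))\<^sup>2 \<le> B\<^sup>2" using Fb[OF True] by (intro power_mono) auto
      then have qF: "q l * (cmod (F l))\<^sup>2 \<le> Q * B\<^sup>2"
        using qb[OF True] qnn[of l] by (intro mult_mono) auto
      have "norm (complex_of_real (q l) * H l * F l) = q l * (cmod (H l) * cmod (F l))"
        using qnn[of l] by (simp add: norm_mult)
      also have "\<dots> \<le> q l * (((cmod (H l))\<^sup>2 / t + t * (cmod (F l))\<^sup>2) / 2)"
        using qnn[of l] amgm_scaled[OF t] by (intro mult_left_mono) auto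
      also have "\<dots> = (q l * (cmod (H l))\<^sup>2 / t + t * (q l * (cmod (F l))\<^sup>2)) / 2"
        by (simp add: algebra_simps)
      also have "\<dots> \<le> b l"
        using qF t True by (simp add: b_def)
      finally show ?thesis .
    qed (use elim qnn t in \<open>simp add: b_def\<close>)
  qed
  show int: "integrable lborel (\<lambda>l. complex_of_real (q l) * H l * F l)"
    by (rule Bochner_Integration.integrable_bound[OF b_int _ bound[THEN AE_mp, OF AE_I2]])
      (use qm Hm Fm in \<open>auto intro: order_trans[OF _ abs_ge_self]\<close>)
  have "norm (\<integral>l. complex_of_real (q l) * H l * F l \<partial>lborel)
      \<le> (\<integral>l. norm (complex_of_real (q l) * H l * F l) \<partial>lborel)"
    by (rule integral_norm_bound)
  also have "\<dots> \<le> integral\<^sup>L lborel b"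
    by (rule integral_mono_AE[OF integrable_norm[OF int] b_int bound])
  also have "\<dots> = (\<integral>l. q l * (cmod (H l))\<^sup>2 \<partial>lborel) / (2 * t) + t * ((v - u) * Q * B\<^sup>2) / 2"
    using Hi uv by (simp add: b_def[abs_def] field_simps)
  finally show "norm (\<integral>l. complex_of_real (q l) * H l * F l \<partial>lborel)
      \<le> (\<integral>l. q l * (cmod (H l))\<^sup>2 \<partial>lborel) / (2 * t) + t * ((v - u) * Q * B\<^sup>2) / 2" .
qed

lemma weighted_pairing_convergence:
  fixes q :: "real \<Rightarrow> real" and F G :: "real \<Rightarrow> complex" and Gs :: "nat \<Rightarrow> real \<Rightarrow> complex"
  assumes qm: "q \<in> borel_measurable borel" and qnn: "\<And>l. 0 \<le> q l"
    and qb: "\<And>l. l \<in> {u..v} \<Longrightarrow> q l \<le> Q"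
    and Fm: "F \<in> borel_measurable borel" and Fb: "\<And>l. l \<in> {u..v} \<Longrightarrow> cmod (F l) \<le> B"
    and Gm: "G \<in> borel_measurable borel" and Gz: "AE l in lborel. l \<notin> {u..v} \<longrightarrow> G l = 0"
    and Gi: "integrable lborel (\<lambda>l. q l * (cmod (G l))\<^sup>2)"
    and Gsm: "\<And>m. Gs m \<in> borel_measurable borel" and Gsz: "\<And>m l. l \<notin> {u..v} \<Longrightarrow> Gs m l = 0"
    and Di: "\<And>m. integrable lborel (\<lambda>l. q l * (cmod (Gs m l - G l))\<^sup>2)"
    and Dl: "\<And>m. (\<integral>l. q l * (cmod (Gs m l - G l))\<^sup>2 \<partial>lborel) \<le> (d m)\<^sup>2"
    and d: "\<And>m. 0 < d m" "d \<longlonglongrightarrow> 0"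
    and uv: "u \<le> v"
  shows "(\<lambda>m. \<integral>l. complex_of_real (q l) * Gs m l * F l \<partial>lborel) \<longlonglongrightarrow>
         (\<integral>l. complex_of_real (q l) * G l * F l \<partial>lborel)"
proof -
  define K where "K = (v - u) * Q * B\<^sup>2"
  note pairing = weighted_pairing_bound[where u = u and v = v and Q = Q and B = B, OF qm qnn _ Fm]
  have Dz: "AE l in lborel. l \<notin> {u..v} \<longrightarrow> Gs m l - G l = 0" for m
    using Gz by eventually_elim (use Gsz in auto)
  have G_int: "integrable lborel (\<lambda>l. complex_of_real (q l) * G l * F l)"
    by (rule pairing(1)[OF _ _ Gm Gz Gi uv zero_less_one]) (use qb Fb in auto)
  have D_int: "integrable lborel (\<lambda>l. complex_of_real (q l) * (Gs m l - G l) * F l)" for m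
    by (rule pairing(1)[OF _ _ _ Dz Di uv zero_less_one]) (use qb Fb Gsm Gm in auto)
  have "norm ((\<integral>l. complex_of_real (q l) * Gs m l * F l \<partial>lborel) -
      (\<integral>l. complex_of_real (q l) * G l * F l \<partial>lborel)) \<le> (1 / 2 + K / 2) * d m" for m
  proof -
    have "(\<integral>l. complex_of_real (q l) * Gs m l * F l \<partial>lborel) =
        (\<integral>l. complex_of_real (q l) * (Gs m l - G l) * F l + complex_of_real (q l) * G l * F l \<partial>lborel)"
      by (rule Bochner_Integration.integral_cong) (simp_all add: ring_distribs)
    also have "\<dots> = (\<integral>l. complex_of_real (q l) * (Gs m l - G l) * F l \<partial>lborel) +
        (\<integral>l. complex_of_real (q l) * G l * F l \<partial>lborel)"
      by (rule Bochner_Integration.integral_add[OF D_int G_int])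
    finally have "norm ((\<integral>l. complex_of_real (q l) * Gs m l * F l \<partial>lborel) -
        (\<integral>l. complex_of_real (q l) * G l * F l \<partial>lborel)) =
        norm (\<integral>l. complex_of_real (q l) * (Gs m l - G l) * F l \<partial>lborel)" by simp
    also have "\<dots> \<le> (\<integral>l. q l * (cmod (Gs m l - G l))\<^sup>2 \<partial>lborel) / (2 * d m) + d m * K / 2"
      unfolding K_def by (rule pairing(2)[OF _ _ _ Dz Di uv d(1)]) (use qb Fb Gsm Gm in auto)
    also have "\<dots> \<le> (d m)\<^sup>2 / (2 * d m) + d m * K / 2"
      by (intro add_right_mono divide_right_mono Dl) (use d(1)[of m] in simp)
    also have "(d m)\<^sup>2 / (2 * d m) = d m / 2"
      using d(1)[of m] by (simp add: power2_eq_square)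
    finally show ?thesis by (simp add: algebra_simps)
  qed
  then have "eventually (\<lambda>m. norm ((\<integral>l. complex_of_real (q l) * Gs m l * F l \<partial>lborel) -
      (\<integral>l. complex_of_real (q l) * G l * F l \<partial>lborel)) \<le> (1 / 2 + K / 2) * d m) sequentially"
    by (intro always_eventually allI)
  from Lim_null_comparison[OF this tendsto_mult_right_zero[OF d(2)]]
  have "(\<lambda>m. (\<integral>l. complex_of_real (q l) * Gs m l * F l \<partial>lborel) -
      (\<integral>l. complex_of_real (q l) * G l * F l \<partial>lborel)) \<longlonglongrightarrow> 0" .
  then show ?thesis by (rule LIM_zero_cancel)
qed


section \<open>Almost everywhere limits from \<open>L\<^sup>2\<close> convergence\<close>

lemma ae_zero_of_L2_null_sequence:
  fixes h :: "nat \<Rightarrow> real \<Rightarrow> complex" and f :: "real \<Rightarrow> complex"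
  assumes hm: "\<And>m. h m \<in> borel_measurable lborel"
    and h_int: "\<And>m. integrable lborel (\<lambda>x. (cmod (h m x))\<^sup>2)"
    and h_null: "(\<lambda>m. \<integral>x. (cmod (h m x))\<^sup>2 \<partial>lborel) \<longlonglongrightarrow> 0"
    and lim: "AE x in lborel. (\<lambda>m. h m x) \<longlonglongrightarrow> f x"
  shows "AE x in lborel. f x = 0"
proof -
  define phi where "phi m x = ennreal ((cmod (h m x))\<^sup>2)" for m x
  have phim: "phi m \<in> borel_measurable lborel" for m
    unfolding phi_def[abs_def] using hm by measurable
  have "integral\<^sup>N lborel (phi m) = ennreal (\<integral>x. (cmod (h m x))\<^sup>2 \<partial>lborel)" for m
    unfolding phi_def by (rule nn_integral_eq_integral[OF h_int]) simp
  moreover have "(\<lambda>m. ennreal (\<integral>x. (cmod (h m x))\<^sup>2 \<partial>lborel)) \<longlonglongrightarrow> 0"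
    using tendsto_ennrealI[OF h_null] by simp
  ultimately have "liminf (\<lambda>m. integral\<^sup>N lborel (phi m)) = 0"
    by (simp add: lim_imp_Liminf)
  moreover have "(\<integral>\<^sup>+ x. liminf (\<lambda>m. phi m x) \<partial>lborel) \<le> liminf (\<lambda>m. integral\<^sup>N lborel (phi m))"
    by (rule nn_integral_liminf) (rule phim)
  ultimately have "(\<integral>\<^sup>+ x. liminf (\<lambda>m. phi m x) \<partial>lborel) = 0"
    by simp
  then have "AE x in lborel. liminf (\<lambda>m. phi m x) = 0"
    by (subst (asm) nn_integral_0_iff_AE) (use phim in measurable)
  then show ?thesis
    using lim
  proof eventually_elim
    case (elim x)
    have "(\<lambda>m. phi m x) \<longlonglongrightarrow> ennreal ((cmod (f x))\<^sup>2)"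
      unfolding phi_def by (intro tendsto_ennrealI tendsto_intros elim(2))
    then have "ennreal ((cmod (f x))\<^sup>2) = 0"
      using elim(1) by (simp add: lim_imp_Liminf)
    then show ?case by simp
  qed
qed


section \<open>The spaces \<open>L\<^sup>2\<^sub>q\<close> and \<open>H\<close>\<close>

lemma in_L2q_diff:
  assumes cpos: "\<forall>k\<in>{1..n}. 0 < c k" and G: "in_L2q n c a G" and H: "in_L2q n c a H"
  shows "in_L2q n c a (\<lambda>j t. G j t - H j t)"
  unfolding in_L2q_def
proof
  fix k assume k: "k \<in> {1..n}"
  have Gk: "set_borel_measurable lborel {a k<..} (G k)"
      "set_integrable lborel {a k<..} (\<lambda>l. qfun n c a k l * (cmod (G k l))\<^sup>2)"
    and Hk: "set_borel_measurable lborel {a k<..} (H k)"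
      "set_integrable lborel {a k<..} (\<lambda>l. qfun n c a k l * (cmod (H k l))\<^sup>2)"
    using G H k unfolding in_L2q_def by auto
  have meas: "set_borel_measurable lborel {a k<..} (\<lambda>t. G k t - H k t)"
    using Gk(1) Hk(1) unfolding set_borel_measurable_def by (simp add: scaleR_diff_right)
  have "(\<lambda>l. indicator {a k<..} l *\<^sub>R (qfun n c a k l * (cmod (G k l - H k l))\<^sup>2)) =
      (\<lambda>l. qfun n c a k l * (cmod (indicator {a k<..} l *\<^sub>R G k l - indicator {a k<..} l *\<^sub>R H k l))\<^sup>2)"
    by (auto simp: indicator_def)
  then have diff_meas: "set_borel_measurable lborel {a k<..} (\<lambda>l. qfun n c a k l * (cmod (G k l - H k l))\<^sup>2)"
    using Gk(1) Hk(1) qfun_measurable unfolding set_borel_measurable_def by simp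
  have sum_int: "set_integrable lborel {a k<..}
      (\<lambda>l. 2 * (qfun n c a k l * (cmod (G k l))\<^sup>2) + 2 * (qfun n c a k l * (cmod (H k l))\<^sup>2))"
    using Gk(2) Hk(2) by (intro set_integral_add(1) set_integrable_mult_right)
  have diff_bound: "norm (qfun n c a k l * (cmod (G k l - H k l))\<^sup>2)
      \<le> norm (2 * (qfun n c a k l * (cmod (G k l))\<^sup>2) + 2 * (qfun n c a k l * (cmod (H k l))\<^sup>2))" for l
  proof -
    have "0 \<le> qfun n c a k l" using cpos k qfun_nonneg by blast
    from mult_left_mono[OF norm_diff_sq_le[of "G k l" "H k l"] this] show ?thesis
      using \<open>0 \<le> qfun n c a k l\<close> by (simp add: algebra_simps)
  qed
  have "set_integrable lborel {a k<..} (\<lambda>l. qfun n c a k l * (cmod (G k l - H k l))\<^sup>2)"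
    by (rule set_integrable_bound[OF sum_int diff_meas AE_I2]) (rule impI, rule diff_bound)
  with meas show "set_borel_measurable lborel {a k<..} (\<lambda>t. G k t - H k t) \<and>
      set_integrable lborel {a k<..} (\<lambda>l. qfun n c a k l * (cmod (G k l - H k l))\<^sup>2)"
    by blast
qed

lemma edge_restriction_L2:
  assumes f: "in_H n f" and k: "k \<in> {1..n}"
  defines "fk x \<equiv> indicator {0<..} x *\<^sub>R f k x"
  shows "fk \<in> borel_measurable lborel" and "integrable lborel (\<lambda>x. (cmod (fk x))\<^sup>2)"
    and "(\<integral>x. (cmod (fk x))\<^sup>2 \<partial>lborel) \<le> (norm_H n f)\<^sup>2"
proof -
  have sq: "(\<lambda>x. (cmod (fk x))\<^sup>2) = (\<lambda>x. indicator {0<..} x *\<^sub>R (cmod (f k x))\<^sup>2)"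
    by (auto simp: fk_def indicator_def)
  show "fk \<in> borel_measurable lborel"
    using f k unfolding in_H_def set_borel_measurable_def fk_def by blast
  show "integrable lborel (\<lambda>x. (cmod (fk x))\<^sup>2)"
    using f k unfolding in_H_def set_integrable_def sq by simp
  have nonneg: "0 \<le> set_lebesgue_integral lborel {0<..} (\<lambda>x. (cmod (f k x))\<^sup>2)" for k
    unfolding set_lebesgue_integral_def by (intro integral_nonneg_AE AE_I2) simp
  have "(\<integral>x. (cmod (fk x))\<^sup>2 \<partial>lborel) = set_lebesgue_integral lborel {0<..} (\<lambda>x. (cmod (f k x))\<^sup>2)"
    unfolding sq set_lebesgue_integral_def ..
  also have "\<dots> \<le> (\<Sum>k\<in>{1..n}. set_lebesgue_integral lborel {0<..} (\<lambda>x. (cmod (f k x))\<^sup>2))"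
    using k nonneg by (intro member_le_sum) auto
  also have "\<dots> = (norm_H n f)\<^sup>2"
    unfolding norm_H_def using nonneg by (simp add: sum_nonneg)
  finally show "(\<integral>x. (cmod (fk x))\<^sup>2 \<partial>lborel) \<le> (norm_H n f)\<^sup>2" .
qed

lemma norm_H_nonneg: "0 \<le> norm_H n f"
  unfolding norm_H_def set_lebesgue_integral_def
  by (intro real_sqrt_ge_zero sum_nonneg integral_nonneg_AE AE_I2) simp

lemma norm_L2q_nonneg:
  assumes cpos: "\<forall>k\<in>{1..n}. 0 < c k"
  shows "0 \<le> norm_L2q n c a G"
  unfolding norm_L2q_def set_lebesgue_integral_def using cpos
  by (intro real_sqrt_ge_zero sum_nonneg integral_nonneg_AE AE_I2)
    (auto intro!: mult_nonneg_nonneg qfun_nonneg)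

text \<open>Indeed \<open>Z\<^sup>~ G - Z (gs m) = Z\<^sup>~ (G - gs m)\<close>
  tends to 0 in \<open>H\<close> by boundedness of \<open>Z\<^sup>~\<close>, and pointwise to \<open>Z\<^sup>~ G - R\<close>.\<close>
lemma Ztilde_ae_limit:
  assumes T: "is_Ztilde n c a chi T" and cpos: "\<forall>k\<in>{1..n}. 0 < c k"
    and G: "in_L2q n c a G" and gs: "\<And>m. gs m \<in> Xset n c a chi"
    and dist: "(\<lambda>m. norm_L2q n c a (\<lambda>j t. G j t - gs m j t)) \<longlonglongrightarrow> 0"
    and conv: "\<And>x. 0 < x \<Longrightarrow> (\<lambda>m. Zmap n c a (gs m) k x) \<longlonglongrightarrow> R x"
    and k: "k \<in> {1..n}"
  shows "AE x in lborel. 0 < x \<longrightarrow> T G k x = R x"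
proof -
  have T_H: "\<And>H. in_L2q n c a H \<Longrightarrow> in_H n (T H)"
    and T_lin: "\<And>H H'. in_L2q n c a H \<Longrightarrow> in_L2q n c a H' \<Longrightarrow>
        ae_eq_N n (T (\<lambda>j t. 1 * H j t + (- 1) * H' j t)) (\<lambda>k x. 1 * T H k x + (- 1) * T H' k x)"
    and T_X: "\<And>H. H \<in> Xset n c a chi \<Longrightarrow> ae_eq_N n (T H) (Zmap n c a H)"
    using T unfolding is_Ztilde_def by blast+
  obtain C where T_bound: "\<And>H. in_L2q n c a H \<Longrightarrow> norm_H n (T H) \<le> C * norm_L2q n c a H"
    using T unfolding is_Ztilde_def by blast
  define D where "D m = (\<lambda>j t. G j t - gs m j t)" for m
  have gs_L2: "in_L2q n c a (gs m)" for m using gs[of m] by (simp add: Xset_def)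
  have D_L2: "in_L2q n c a (D m)" for m unfolding D_def by (rule in_L2q_diff[OF cpos G gs_L2])
  have "AE x in lborel. \<forall>m. 0 < x \<longrightarrow> T (D m) k x = T G k x - Zmap n c a (gs m) k x"
    unfolding AE_all_countable
  proof
    fix m
    have "AE x in lborel. 0 < x \<longrightarrow> T (D m) k x = T G k x - T (gs m) k x"
      using T_lin[OF G gs_L2, of m] k unfolding ae_eq_N_def D_def by simp
    moreover have "AE x in lborel. 0 < x \<longrightarrow> T (gs m) k x = Zmap n c a (gs m) k x"
      using T_X[OF gs] k unfolding ae_eq_N_def by blast
    ultimately show "AE x in lborel. 0 < x \<longrightarrow> T (D m) k x = T G k x - Zmap n c a (gs m) k x"
      by eventually_elim auto
  qed
  define h where "h m x = indicator {0<..} x *\<^sub>R T (D m) k x" for m x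
  have "AE x in lborel. (\<lambda>m. h m x) \<longlonglongrightarrow> indicator {0<..} x *\<^sub>R (T G k x - R x)"
    using \<open>AE x in lborel. \<forall>m. 0 < x \<longrightarrow> _\<close>
  proof eventually_elim
    case (elim x)
    show ?case
    proof (cases "0 < x")
      case True
      then show ?thesis using elim by (simp add: h_def tendsto_diff[OF tendsto_const conv])
    qed (simp add: h_def)
  qed
  moreover note h_L2 = edge_restriction_L2[OF T_H[OF D_L2] k, folded h_def]
  moreover have "(\<lambda>m. \<integral>x. (cmod (h m x))\<^sup>2 \<partial>lborel) \<longlonglongrightarrow> 0"
  proof (rule tendsto_sandwich[OF always_eventually always_eventually])
    show "\<forall>m. 0 \<le> (\<integral>x. (cmod (h m x))\<^sup>2 \<partial>lborel)" by simp
    show "\<forall>m. (\<integral>x. (cmod (h m x))\<^sup>2 \<partial>lborel) \<le> (C * norm_L2q n c a (D m))\<^sup>2"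
      using h_L2(3) T_bound[OF D_L2] norm_H_nonneg by (meson order_trans power_mono)
    show "(\<lambda>m. (C * norm_L2q n c a (D m))\<^sup>2) \<longlonglongrightarrow> 0"
      using tendsto_power[OF tendsto_mult_right_zero[OF dist], of C 2] by (simp add: D_def)
  qed simp
  ultimately have "AE x in lborel. indicator {0<..} x *\<^sub>R (T G k x - R x) = 0"
    by (intro ae_zero_of_L2_null_sequence[of h]) blast+
  then show ?thesis by eventually_elim (simp add: indicator_def)
qed


section \<open>Smooth approximants of elements of \<open>Y\<close>\<close>

definition edge_approximants :: "nat \<Rightarrow> (nat \<Rightarrow> real) \<Rightarrow> (nat \<Rightarrow> real) \<Rightarrow> nat \<Rightarrow> (real \<Rightarrow> complex)
    \<Rightarrow> real \<Rightarrow> real \<Rightarrow> (nat \<Rightarrow> real \<Rightarrow> complex) \<Rightarrow> bool" where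
  "edge_approximants n c a j g u v gs \<longleftrightarrow> a j < u \<and> u \<le> v \<and>
     (AE l in lborel. l \<notin> {u..v} \<longrightarrow> indicator {a j<..} l *\<^sub>R g l = 0) \<and>
     (\<forall>m. smooth (gs m) \<and> (\<forall>t. t \<notin> {u..v} \<longrightarrow> gs m t = 0) \<and>
        integrable lborel (\<lambda>l. qfun n c a j l * (cmod (gs m l - indicator {a j<..} l *\<^sub>R g l))\<^sup>2) \<and>
        (\<integral>l. qfun n c a j l * (cmod (gs m l - indicator {a j<..} l *\<^sub>R g l))\<^sup>2 \<partial>lborel) \<le> (1 / Suc m)\<^sup>2)"

definition smooth_approximants :: "nat \<Rightarrow> (nat \<Rightarrow> real) \<Rightarrow> (nat \<Rightarrow> real) \<Rightarrow> (nat \<Rightarrow> real \<Rightarrow> complex)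
    \<Rightarrow> (nat \<Rightarrow> real) \<Rightarrow> (nat \<Rightarrow> real) \<Rightarrow> (nat \<Rightarrow> nat \<Rightarrow> real \<Rightarrow> complex) \<Rightarrow> bool" where
  "smooth_approximants n c a G u v gs \<longleftrightarrow>
     (\<forall>j\<in>{1..n}. edge_approximants n c a j (G j) (u j) (v j) (\<lambda>m. gs m j))"

lemma support_interval:
  fixes b :: real and K :: "real set" and g :: "real \<Rightarrow> complex"
  assumes K: "compact K" and bK: "b \<notin> K"
    and zero: "AE lam in lborel. b < lam \<and> lam \<notin> K \<longrightarrow> g lam = 0"
  shows "\<exists>u0 v0. b < u0 \<and> u0 \<le> v0 \<and>
    (AE lam in lborel. lam \<notin> {u0..v0} \<longrightarrow> indicator {b<..} lam *\<^sub>R g lam = 0)"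
proof -
  have "open (- K)" using compact_imp_closed[OF K] by auto
  then obtain d where d: "0 < d" "ball b d \<subseteq> - K" using bK open_contains_ball by blast
  obtain B0 where B0: "\<And>x. x \<in> K \<Longrightarrow> \<bar>x\<bar> \<le> B0"
    using compact_imp_bounded[OF K] unfolding bounded_iff by auto
  define v0 where "v0 = max B0 (b + d)"
  have notK: "lam \<notin> K" if "b < lam" "lam \<notin> {b + d..v0}" for lam
  proof
    assume lK: "lam \<in> K"
    show False
    proof (cases "lam < b + d")
      case True
      then have "lam \<in> ball b d" using that by (auto simp: dist_real_def)
      then show False using d lK by auto
    next
      case False
      then show False using that B0[OF lK] by (auto simp: v0_def)
    qed
  qed
  then have "AE lam in lborel. lam \<notin> {b + d..v0} \<longrightarrow> indicator {b<..} lam *\<^sub>R g lam = 0"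
    using zero by eventually_elim (use notK in \<open>auto simp: indicator_def\<close>)
  then show ?thesis using d by (intro exI[of _ "b + d"] exI[of _ v0]) (auto simp: v0_def)
qed

lemma edge_smooth_approximants:
  fixes chi :: "real \<Rightarrow> real" and g :: "real \<Rightarrow> complex"
  assumes cpos: "\<forall>k\<in>{1..n}. 0 < c k" and j: "j \<in> {1..n}"
    and chi_smooth: "C_inf_on UNIV chi"
    and chi0: "\<forall>t. t < A + 1 \<longrightarrow> chi t = 0" and chi1: "\<forall>t. A + 2 < t \<longrightarrow> chi t = 1"
    and gm: "set_borel_measurable lborel {a j<..} g"
    and g_int: "set_integrable lborel {a j<..} (\<lambda>l. qfun n c a j l * (cmod (g l))\<^sup>2)"
    and K: "compact K" "a j \<notin> K" and zero: "AE lam in lborel. a j < lam \<and> lam \<notin> K \<longrightarrow> g lam = 0"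
  shows "\<exists>u v gs. edge_approximants n c a j g u v gs"
proof -
  define g' where "g' l = indicator {a j<..} l *\<^sub>R g l" for l
  obtain u0 v0 where u0: "a j < u0" "u0 \<le> v0" and g'_supp: "AE l in lborel. l \<notin> {u0..v0} \<longrightarrow> g' l = 0"
    using support_interval[OF K zero] unfolding g'_def by blast
  define u where "u = (a j + u0) / 2"
  define v where "v = v0 + 1"
  have uv: "a j < u" "u < u0" "v0 < v" "u \<le> v" using u0 by (auto simp: u_def v_def)
  obtain psi where psi: "smooth psi" "\<And>t. t \<in> {u0..v0} \<Longrightarrow> psi t = 1" "\<And>t. t \<notin> {u..v} \<Longrightarrow> psi t = 0"
    using smooth_plateau[OF chi_smooth chi0 chi1 uv(2,3)] by blast
  have g'm: "g' \<in> borel_measurable borel" using gm unfolding set_borel_measurable_def g'_def by simp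
  have "(\<lambda>l. qfun n c a j l * (cmod (g' l))\<^sup>2) =
      (\<lambda>l. indicator {a j<..} l *\<^sub>R (qfun n c a j l * (cmod (g l))\<^sup>2))"
    by (auto simp: g'_def indicator_def)
  then have g'_int: "integrable lborel (\<lambda>l. qfun n c a j l * (cmod (g' l))\<^sup>2)"
    using g_int unfolding set_integrable_def by simp
  have q_bound: "qfun n c a j l \<le> 1 / (pi * c j * sqrt ((u - a j) / c j))" if "l \<in> {u..v}" for l
    using qfun_bound[of n c j a u l, OF cpos j uv(1)] that by auto
  have q_nonneg: "0 \<le> qfun n c a j l" for l using cpos j qfun_nonneg by blast
  have error_pos: "0 < (1 / real (Suc m))\<^sup>2" for m by (intro zero_less_power) simp
  have "\<exists>P. polynomial_function P \<and>
      integrable lborel (\<lambda>l. qfun n c a j l * (cmod (psi l * P l - g' l))\<^sup>2) \<and>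
      (\<integral>l. qfun n c a j l * (cmod (psi l * P l - g' l))\<^sup>2 \<partial>lborel) < (1 / Suc m)\<^sup>2" for m
    by (rule weighted_L2_plateau_polynomial_approx[OF g'm g'_int qfun_measurable q_nonneg q_bound g'_supp
        less_imp_le[OF uv(2)] less_imp_le[OF uv(3)] uv(4) psi error_pos]) simp_all
  then obtain P where P: "\<forall>m. polynomial_function (P m) \<and>
      integrable lborel (\<lambda>l. qfun n c a j l * (cmod (psi l * P m l - g' l))\<^sup>2) \<and>
      (\<integral>l. qfun n c a j l * (cmod (psi l * P m l - g' l))\<^sup>2 \<partial>lborel) < (1 / Suc m)\<^sup>2"
    using choice[of "\<lambda>m P. polynomial_function P \<and>
      integrable lborel (\<lambda>l. qfun n c a j l * (cmod (psi l * P l - g' l))\<^sup>2) \<and>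
      (\<integral>l. qfun n c a j l * (cmod (psi l * P l - g' l))\<^sup>2 \<partial>lborel) < (1 / Suc m)\<^sup>2"] by blast
  define gs where "gs m t = psi t * P m t" for m t
  have "smooth (gs m)" for m
    unfolding gs_def[abs_def] using P by (intro smooth_mult psi(1) smooth_polynomial_function) blast
  moreover have "gs m t = 0" if "t \<notin> {u..v}" for m t using psi(3)[OF that] by (simp add: gs_def)
  moreover have "integrable lborel (\<lambda>l. qfun n c a j l * (cmod (gs m l - g' l))\<^sup>2)"
    and "(\<integral>l. qfun n c a j l * (cmod (gs m l - g' l))\<^sup>2 \<partial>lborel) \<le> (1 / Suc m)\<^sup>2" for m
    using P unfolding gs_def by (auto simp: less_imp_le)
  moreover have "AE l in lborel. l \<notin> {u..v} \<longrightarrow> g' l = 0"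
    using g'_supp by eventually_elim (use uv in auto)
  ultimately have "edge_approximants n c a j g u v gs"
    using uv(1,4) unfolding edge_approximants_def g'_def by blast
  then show ?thesis by blast
qed

lemma Yset_smooth_approximants:
  fixes chi :: "real \<Rightarrow> real"
  assumes cpos: "\<forall>k\<in>{1..n}. 0 < c k" and chi_smooth: "C_inf_on UNIV chi"
    and chi0: "\<forall>t. t < A + 1 \<longrightarrow> chi t = 0" and chi1: "\<forall>t. A + 2 < t \<longrightarrow> chi t = 1"
    and G: "G \<in> Yset n c a"
  shows "\<exists>u v gs. smooth_approximants n c a G u v gs"
proof -
  have "\<exists>p. edge_approximants n c a j (G j) (fst p) (fst (snd p)) (snd (snd p))" if j: "j \<in> {1..n}" for j
  proof -
    obtain K where K: "compact K" "a j \<notin> K" "AE lam in lborel. a j < lam \<and> lam \<notin> K \<longrightarrow> G j lam = 0"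
      using G j unfolding Yset_def by blast
    have "set_borel_measurable lborel {a j<..} (G j)"
      "set_integrable lborel {a j<..} (\<lambda>l. qfun n c a j l * (cmod (G j l))\<^sup>2)"
      using G j unfolding Yset_def in_L2q_def by auto
    from edge_smooth_approximants[OF cpos j chi_smooth chi0 chi1 this K]
    obtain u v g where "edge_approximants n c a j (G j) u v g" by blast
    then show ?thesis by (intro exI[of _ "(u, v, g)"]) simp
  qed
  then obtain p where "\<And>j. j \<in> {1..n} \<Longrightarrow> edge_approximants n c a j (G j) (fst (p j)) (fst (snd (p j))) (snd (snd (p j)))"
    using bchoice[of "{1..n}" "\<lambda>j p. edge_approximants n c a j (G j) (fst p) (fst (snd p)) (snd (snd p))"] by blast
  then have "smooth_approximants n c a G (\<lambda>j. fst (p j)) (\<lambda>j. fst (snd (p j))) (\<lambda>m j. snd (snd (p j)) m)"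
    unfolding smooth_approximants_def by simp
  then show ?thesis by blast
qed

lemma edge_approximants_vanish_below:
  assumes "edge_approximants n c a j g u v gs" and "t \<le> a j"
  shows "gs m t = 0"
  using assms unfolding edge_approximants_def by auto

text \<open>The approximants lie in \<open>X\<close>: they are smooth, and since they vanish near and below \<open>a\<^sub>j\<close>,
  the product with \<open>chi\<close> is smooth with compact support, hence a Schwartz function.\<close>
lemma smooth_approximants_in_Xset:
  fixes chi :: "real \<Rightarrow> real"
  assumes cpos: "\<forall>k\<in>{1..n}. 0 < c k" and chi_smooth: "C_inf_on UNIV chi"
    and approx: "smooth_approximants n c a G u v gs"
  shows "gs m \<in> Xset n c a chi"
proof -
  have edge: "set_borel_measurable lborel {a j<..} (gs m j) \<and>
      set_integrable lborel {a j<..} (\<lambda>l. qfun n c a j l * (cmod (gs m j l))\<^sup>2) \<and>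
      C_inf_on {a j..} (gs m j) \<and>
      schwartz (\<lambda>t. if a j \<le> t then complex_of_real (chi t) * gs m j t else 0)"
    if j: "j \<in> {1..n}" for j
  proof -
    have E: "edge_approximants n c a j (G j) (u j) (v j) (\<lambda>m. gs m j)"
      using approx j unfolding smooth_approximants_def by blast
    then have uv: "a j < u j" "u j \<le> v j" and sm: "smooth (gs m j)"
      and zero: "\<And>t. t \<notin> {u j..v j} \<Longrightarrow> gs m j t = 0"
      unfolding edge_approximants_def by auto
    have below: "gs m j t = 0" if "t \<le> a j" for t using edge_approximants_vanish_below[OF E that] by simp
    have meas: "gs m j \<in> borel_measurable borel"
      by (rule borel_measurable_continuous_onI[OF smooth_continuous_on[OF sm]])
    obtain B where B: "\<And>t. t \<in> {u j..v j} \<Longrightarrow> cmod (gs m j t) \<le> B"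
      using compact_imp_bounded[OF compact_continuous_image[OF smooth_continuous_on[OF sm] compact_Icc]]
      unfolding bounded_iff by blast
    have "integrable lborel (\<lambda>l. qfun n c a j l * (cmod (gs m j l))\<^sup>2)"
      by (rule weighted_L2_compact_support(1)[OF qfun_measurable _ _ meas B zero uv(2)])
        (use cpos j qfun_nonneg qfun_bound[of n c j a "u j", OF cpos j uv(1)] in auto)
    moreover have "(\<lambda>l. indicator {a j<..} l *\<^sub>R (qfun n c a j l * (cmod (gs m j l))\<^sup>2)) =
        (\<lambda>l. qfun n c a j l * (cmod (gs m j l))\<^sup>2)"
      using below by (auto simp: indicator_def fun_eq_iff)
    ultimately have "set_borel_measurable lborel {a j<..} (gs m j)"
      "set_integrable lborel {a j<..} (\<lambda>l. qfun n c a j l * (cmod (gs m j l))\<^sup>2)"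
      unfolding set_integrable_def set_borel_measurable_def using meas by simp_all
    moreover have "(\<lambda>t. if a j \<le> t then complex_of_real (chi t) * gs m j t else 0) =
        (\<lambda>t. complex_of_real (chi (0 + 1 * t)) * gs m j t)"
      using below by (auto simp: fun_eq_iff)
    moreover have "smooth (\<lambda>t. complex_of_real (chi (0 + 1 * t)) * gs m j t)"
      by (intro smooth_mult smooth_affine_comp chi_smooth sm)
    ultimately show ?thesis
      using smooth_compact_support_schwartz[of _ "u j" "v j"] zero smooth_imp_C_inf_on[OF sm] by simp
  qed
  then show ?thesis unfolding Xset_def in_L2q_def by blast
qed

text \<open>The approximants converge to \<open>G\<close> in \<open>L\<^sup>2\<^sub>q\<close>: \<open>\<parallel>G - gs m\<parallel> \<le> \<surd>n / (m + 1)\<close>.\<close>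
lemma smooth_approximants_L2q_convergence:
  assumes cpos: "\<forall>k\<in>{1..n}. 0 < c k" and approx: "smooth_approximants n c a G u v gs"
  shows "(\<lambda>m. norm_L2q n c a (\<lambda>j t. G j t - gs m j t)) \<longlonglongrightarrow> 0"
proof -
  have "set_lebesgue_integral lborel {a k<..} (\<lambda>l. qfun n c a k l * (cmod (G k l - gs m k l))\<^sup>2)
      \<le> (1 / Suc m)\<^sup>2" if k: "k \<in> {1..n}" for k m
  proof -
    have E: "edge_approximants n c a k (G k) (u k) (v k) (\<lambda>m. gs m k)"
      using approx k unfolding smooth_approximants_def by blast
    have "(\<lambda>l. indicator {a k<..} l *\<^sub>R (qfun n c a k l * (cmod (G k l - gs m k l))\<^sup>2)) =
        (\<lambda>l. qfun n c a k l * (cmod (gs m k l - indicator {a k<..} l *\<^sub>R G k l))\<^sup>2)"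
      using edge_approximants_vanish_below[OF E] by (auto simp: indicator_def fun_eq_iff norm_minus_commute)
    then show ?thesis
      using E unfolding set_lebesgue_integral_def edge_approximants_def by simp
  qed
  then have "norm_L2q n c a (\<lambda>j t. G j t - gs m j t) \<le> sqrt (\<Sum>k\<in>{1..n}. (1 / Suc m)\<^sup>2)" for m
    unfolding norm_L2q_def by (intro real_sqrt_le_mono sum_mono) simp
  also have "sqrt (\<Sum>k\<in>{1..n}. (1 / Suc m)\<^sup>2) = sqrt n * inverse (Suc m)" for m
    by (simp add: real_sqrt_mult divide_inverse)
  finally have "norm (norm_L2q n c a (\<lambda>j t. G j t - gs m j t)) \<le> sqrt n * inverse (Suc m)" for m
    using norm_L2q_nonneg[OF cpos] by simp
  then show ?thesis
    by (intro Lim_null_comparison[OF always_eventually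
          tendsto_mult_right_zero[where c = "sqrt n", OF LIMSEQ_inverse_real_of_nat]]) simp
qed

text \<open>Pointwise convergence of \<open>Z (gs m)\<close>: on each edge \<open>j\<close> the integrands are supported in
  \<open>[u\<^sub>j, v\<^sub>j]\<close>, where \<open>q\<^sub>j\<close> and \<open>F\<^sup>-\<^sup>,\<^sup>j\<^sub>\<lambda>(x)\<close> are bounded.\<close>
lemma smooth_approximants_Zmap_convergence:
  assumes cpos: "\<forall>k\<in>{1..n}. 0 < c k" and G: "in_L2q n c a G"
    and approx: "smooth_approximants n c a G u v gs" and x: "0 < x"
  shows "(\<lambda>m. Zmap n c a (gs m) k x) \<longlonglongrightarrow> (\<Sum>j\<in>{1..n}. set_lebesgue_integral lborel {a j<..}
           (\<lambda>lam. complex_of_real (qfun n c a j lam) * G j lam * Fminus n c a j (complex_of_real lam) k x))"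
  unfolding Zmap_def
proof (rule tendsto_sum)
  fix j assume j: "j \<in> {1..n}"
  define F where "F lam = Fminus n c a j (complex_of_real lam) k x" for lam
  define G' where "G' l = indicator {a j<..} l *\<^sub>R G j l" for l
  have E: "edge_approximants n c a j (G j) (u j) (v j) (\<lambda>m. gs m j)"
    using approx j unfolding smooth_approximants_def by blast
  then have uv: "a j < u j" "u j \<le> v j"
    and G'_supp: "AE l in lborel. l \<notin> {u j..v j} \<longrightarrow> G' l = 0"
    and gs: "\<And>m. smooth (gs m j)" "\<And>m t. t \<notin> {u j..v j} \<Longrightarrow> gs m j t = 0"
      "\<And>m. integrable lborel (\<lambda>l. qfun n c a j l * (cmod (gs m j l - G' l))\<^sup>2)"
      "\<And>m. (\<integral>l. qfun n c a j l * (cmod (gs m j l - G' l))\<^sup>2 \<partial>lborel) \<le> (1 / Suc m)\<^sup>2"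
    unfolding edge_approximants_def G'_def by auto
  have G'm: "G' \<in> borel_measurable borel"
    using G j unfolding in_L2q_def set_borel_measurable_def G'_def by auto
  have "(\<lambda>l. qfun n c a j l * (cmod (G' l))\<^sup>2) = (\<lambda>l. indicator {a j<..} l *\<^sub>R (qfun n c a j l * (cmod (G j l))\<^sup>2))"
    by (auto simp: G'_def indicator_def)
  then have G'_int: "integrable lborel (\<lambda>l. qfun n c a j l * (cmod (G' l))\<^sup>2)"
    using G j unfolding in_L2q_def set_integrable_def by simp
  have "(\<lambda>m. \<integral>l. complex_of_real (qfun n c a j l) * gs m j l * F l \<partial>lborel) \<longlonglongrightarrow>
      (\<integral>l. complex_of_real (qfun n c a j l) * G' l * F l \<partial>lborel)"
  proof (rule weighted_pairing_convergence[where d = "\<lambda>m. 1 / real (Suc m)"])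
    show "qfun n c a j \<in> borel_measurable borel" by (rule qfun_measurable)
    show "0 \<le> qfun n c a j l" for l using cpos j qfun_nonneg by blast
    show "qfun n c a j l \<le> 1 / (pi * c j * sqrt ((u j - a j) / c j))" if "l \<in> {u j..v j}" for l
      using qfun_bound[of n c j a "u j" l, OF cpos j uv(1)] that by auto
    show "F \<in> borel_measurable borel" unfolding F_def by (rule Fminus_measurable)
    show "cmod (F l) \<le> 1 + (\<Sum>i\<in>{1..n}. c i * sqrt ((\<bar>u j\<bar> + \<bar>v j\<bar> + \<bar>a i\<bar>) / c i)) / (c j * sqrt ((u j - a j) / c j))"
      if "l \<in> {u j..v j}" for l
      unfolding F_def using Fminus_bound[of n c j a "u j" l "v j" x k, OF cpos j uv(1)] that x by auto
    show "gs m j \<in> borel_measurable borel" for m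
      by (rule borel_measurable_continuous_onI[OF smooth_continuous_on[OF gs(1)]])
    show "(\<lambda>m. 1 / real (Suc m)) \<longlonglongrightarrow> 0"
      using LIMSEQ_inverse_real_of_nat by (simp add: inverse_eq_divide)
  qed (use G'm G'_supp G'_int gs(2-4) uv(2) in simp_all)
  moreover have "set_lebesgue_integral lborel {a j<..}
      (\<lambda>lam. complex_of_real (qfun n c a j lam) * gs m j lam * F lam) =
      (\<integral>l. complex_of_real (qfun n c a j l) * gs m j l * F l \<partial>lborel)" for m
    unfolding set_lebesgue_integral_def
    by (intro Bochner_Integration.integral_cong) (auto simp: indicator_def edge_approximants_vanish_below[OF E])
  moreover have "set_lebesgue_integral lborel {a j<..}
      (\<lambda>lam. complex_of_real (qfun n c a j lam) * G j lam * F lam) =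
      (\<integral>l. complex_of_real (qfun n c a j l) * G' l * F l \<partial>lborel)"
    unfolding set_lebesgue_integral_def
    by (intro Bochner_Integration.integral_cong) (auto simp: indicator_def G'_def)
  ultimately show "(\<lambda>m. set_lebesgue_integral lborel {a j<..}
        (\<lambda>lam. complex_of_real (qfun n c a j lam) * gs m j lam * Fminus n c a j (complex_of_real lam) k x))
      \<longlonglongrightarrow> set_lebesgue_integral lborel {a j<..}
        (\<lambda>lam. complex_of_real (qfun n c a j lam) * G j lam * Fminus n c a j (complex_of_real lam) k x)"
    unfolding F_def by simp
qed


section \<open>The integral representation of \<open>Z\<^sup>~\<close> on \<open>Y\<close>\<close>

theorem lemma7p6:
  fixes n :: nat and c a :: "nat \<Rightarrow> real" and chi :: "real \<Rightarrow> real"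
    and T :: "(nat \<Rightarrow> real \<Rightarrow> complex) \<Rightarrow> (nat \<Rightarrow> real \<Rightarrow> complex)"
    and G :: "nat \<Rightarrow> real \<Rightarrow> complex"
  assumes n2: "2 \<le> n"
    and cpos: "\<forall>k\<in>{1..n}. 0 < c k"
    and a0: "0 \<le> a 1"
    and amono: "\<forall>i j. 1 \<le> i \<and> i \<le> j \<and> j \<le> n \<longrightarrow> a i \<le> a j"
    and chi_smooth: "C_inf_on UNIV chi"
    and chi0: "\<forall>t. t < a n + 1 \<longrightarrow> chi t = 0"
    and chi1: "\<forall>t. a n + 2 < t \<longrightarrow> chi t = 1"
    and T: "is_Ztilde n c a chi T"
    and G: "G \<in> Yset n c a"
  shows "\<forall>k\<in>{1..n}. AE x in lborel. 0 < x \<longrightarrow>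
           T G k x = (\<Sum>j\<in>{1..n}. set_lebesgue_integral lborel {a j<..}
              (\<lambda>lam. complex_of_real (qfun n c a j lam) * G j lam
                       * Fminus n c a j (complex_of_real lam) k x))"
proof
  fix k assume k: "k \<in> {1..n}"
  obtain u v gs where approx: "smooth_approximants n c a G u v gs"
    using Yset_smooth_approximants[OF cpos chi_smooth chi0 chi1 G] by blast
  have G_L2: "in_L2q n c a G" using G by (simp add: Yset_def)
  show "AE x in lborel. 0 < x \<longrightarrow>
           T G k x = (\<Sum>j\<in>{1..n}. set_lebesgue_integral lborel {a j<..}
              (\<lambda>lam. complex_of_real (qfun n c a j lam) * G j lam
                       * Fminus n c a j (complex_of_real lam) k x))"
    by (rule Ztilde_ae_limit[OF T cpos G_L2 smooth_approximants_in_Xset[OF cpos chi_smooth approx]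
          smooth_approximants_L2q_convergence[OF cpos approx]
          smooth_approximants_Zmap_convergence[OF cpos G_L2 approx] k])
qed

end
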